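(* Let $(X,\mathcal{A},\mu,T)$ be an ergodic probability-preserving system and $(E_k)_{k\geq1}$ a sequence in $\mathcal{A}$ with $\mu(E_k)>0$ for all $k$ and $\mu(E_k)\to0$. Let $Y\in\mathcal{A}$ with $\mu(Y)>0$, and let $(E_k')_{k\geq1}$ be a sequence of measurable sets with $E_k'\subseteq Y$ such that for every $k\geq1$, points of $Y$ can only reach $E_k$ via $E_k'$. Let $\mathsf{R}$ be any random variable with values in $[0,\infty]$. (a) If $\mu(E_k')\,(\varphi_{E_k}-\varphi_{E_k'})\to0$ in $\mu_Y$-measure as $k\to\infty$, then $\mu(E_k')\to0$, and $$\mu_Y(E_k')\,\varphi^Y_{E_k'}\ \text{converges in law to}\ \mathsf{R}\ \text{on the probability space } (X,\mathcal{A},\mu_Y)$$ holds if and only if $$\mu(E_k')\,\varphi_{E_k}\ \text{converges in law to}\ \mathsf{R}\ \text{on the probability space } (X,\mathcal{A},\mu),$$ as $k\to\infty$. (b) If there exists a constant $M\geq0$ such that $E_k'\subseteq\bigcup_{m=0}^{M}T^{-m}E_k$ for all $k\geq1$, then $\mu(E_k')\,(\varphi_{E_k}-\varphi_{E_k'})\to0$ in $\mu_Y$-measure as $k\to\infty$.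
   Context: A measure preserving transformation $T$ of $(X,\mathcal{A},\mu)$ is a measurable map with $\mu\circ T^{-1}=\mu$ (possibly non-invertible). For $A\in\mathcal{A}$, the first hitting time is $\varphi_A(x):=\min\{n\geq1:T^nx\in A\}$ (with $\min\emptyset=\infty$). For $Y$ with $\mu(Y)>0$, $\mu_Y(B):=\mu(Y\cap B)/\mu(Y)$, the first return map is $T_Y x:=T^{\varphi_Y(x)}x$, and for $E\subseteq Y$ measurable the induced hitting time is $\varphi^Y_E(x):=\inf\{j\geq1: T_Y^j x\in E\}$, $x\in Y$. "Points of $Y$ can only reach $E$ via $E'$" means: for every $n\geq0$ and a.e. $x\in Y$, if $T^nx\in E$ then $T^jx\in E'$ for some $j\in\{0,\dots,n\}$. Convergence in law of $[0,\infty)$-valued functions to a $[0,\infty]$-valued $\mathsf{R}$ means convergence of distribution functions at all continuity points $t$ of $t\mapsto\Pr[\mathsf{R}\leq t]$. *)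

theory Defs
  imports "HOL-Probability.Probability"
begin

definition mpt :: "'a measure \<Rightarrow> ('a \<Rightarrow> 'a) \<Rightarrow> bool" where
  "mpt M T \<longleftrightarrow> T \<in> M \<rightarrow>\<^sub>M M \<and> distr M M T = M"

definition ergodic_pps :: "'a measure \<Rightarrow> ('a \<Rightarrow> 'a) \<Rightarrow> bool" where
  "ergodic_pps M T \<longleftrightarrow> prob_space M \<and> mpt M T \<and>
     (\<forall>A \<in> sets M. T -` A \<inter> space M = A \<longrightarrow> measure M A = 0 \<or> measure M A = 1)"

definition hit :: "('a \<Rightarrow> 'a) \<Rightarrow> 'a set \<Rightarrow> 'a \<Rightarrow> enat" where
  "hit S A x = (if \<exists>n\<ge>1. (S ^^ n) x \<in> A then enat (LEAST n. n \<ge> 1 \<and> (S ^^ n) x \<in> A) else \<infinity>)"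

text \<open>First return map to Y (set to the identity where there is no return; irrelevant a.e.).\<close>
definition return_map :: "('a \<Rightarrow> 'a) \<Rightarrow> 'a set \<Rightarrow> 'a \<Rightarrow> 'a" where
  "return_map T Y x = (case hit T Y x of enat n \<Rightarrow> (T ^^ n) x | \<infinity> \<Rightarrow> x)"

definition ind_hit :: "('a \<Rightarrow> 'a) \<Rightarrow> 'a set \<Rightarrow> 'a set \<Rightarrow> 'a \<Rightarrow> enat" where
  "ind_hit T Y E = hit (return_map T Y) E"

definition reach_only_via :: "'a measure \<Rightarrow> ('a \<Rightarrow> 'a) \<Rightarrow> 'a set \<Rightarrow> 'a set \<Rightarrow> 'a set \<Rightarrow> bool" where
  "reach_only_via M T Y E E' \<longleftrightarrow>
     (\<forall>n. AE x in M. x \<in> Y \<longrightarrow> (T ^^ n) x \<in> E \<longrightarrow> (\<exists>j\<le>n. (T ^^ j) x \<in> E'))"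

definition scale :: "real \<Rightarrow> enat \<Rightarrow> ereal" where
  "scale c h = ereal c * (case h of enat n \<Rightarrow> ereal (real n) | \<infinity> \<Rightarrow> \<infinity>)"

text \<open>c * (a - b) for hitting times a, b; set to \<infinity> where either time is infinite
  (such points are counted as "not close to 0").\<close>
definition scaled_diff :: "real \<Rightarrow> enat \<Rightarrow> enat \<Rightarrow> ereal" where
  "scaled_diff c a b = (case (a, b) of (enat m, enat n) \<Rightarrow> ereal (c * (real m - real n)) | _ \<Rightarrow> \<infinity>)"

definition tendsto_zero_in_measure :: "'a measure \<Rightarrow> (nat \<Rightarrow> 'a \<Rightarrow> ereal) \<Rightarrow> bool" where
  "tendsto_zero_in_measure P f \<longleftrightarrow>
     (\<forall>\<epsilon>>0. (\<lambda>k. measure P {x \<in> space P. \<not> (\<bar>f k x\<bar> < ereal \<epsilon>)}) \<longlonglongrightarrow> 0)"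

definition dist_fun :: "'b measure \<Rightarrow> ('b \<Rightarrow> ereal) \<Rightarrow> real \<Rightarrow> real" where
  "dist_fun N R t = measure N {\<omega> \<in> space N. R \<omega> \<le> ereal t}"

definition conv_in_law :: "'a measure \<Rightarrow> (nat \<Rightarrow> 'a \<Rightarrow> ereal) \<Rightarrow> 'b measure \<Rightarrow> ('b \<Rightarrow> ereal) \<Rightarrow> bool" where
  "conv_in_law P f N R \<longleftrightarrow>
     (\<forall>t. isCont (dist_fun N R) t \<longrightarrow>
        (\<lambda>k. measure P {x \<in> space P. f k x \<le> ereal t}) \<longlonglongrightarrow> dist_fun N R t)"

end

theory Submission
  imports Defs
begin

text \<open>
  Part (b): a point of \<open>Y\<close> outside \<open>E'\<^sub>k\<close> can reach \<open>E\<^sub>k\<close> only through \<open>E'\<^sub>k\<close>, from where \<open>E\<^sub>k\<close> is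
  reached within \<open>M\<close> steps; so \<open>0 \<le> \<phi>\<^bsub>E\<^sub>k\<^esub> - \<phi>\<^bsub>E'\<^sub>k\<^esub> \<le> M\<close> off \<open>E'\<^sub>k\<close>, and \<open>\<mu>(E'\<^sub>k) \<le> (M + 1) \<mu>(E\<^sub>k) \<rightarrow> 0\<close>.

  Part (a): by a Kac-type inequality, \<open>\<mu>(E'\<^sub>k \<setminus> E\<^sub>k)\<close> is at most the measure of the points of \<open>E'\<^sub>k\<close>
  whose first return to \<open>E'\<^sub>k\<close> misses \<open>E\<^sub>k\<close>, and at those points the scaled difference of hitting
  times is at least \<open>\<mu>(E'\<^sub>k)\<close>; hence \<open>\<mu>(E'\<^sub>k) \<rightarrow> 0\<close>.
  The laws are then compared in three steps, each time showing that the distribution functions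
  agree up to arbitrarily small shifts of the argument and small errors, which suffices at the
  continuity points of the limit:
  (i) under \<open>\<mu>\<^sub>Y\<close>, \<open>\<mu>(E'\<^sub>k) \<phi>\<^bsub>E'\<^sub>k\<^esub>\<close> and \<open>\<mu>(E'\<^sub>k) \<phi>\<^bsub>E\<^sub>k\<^esub>\<close> are close in measure by hypothesis;
  (ii) the law of \<open>\<mu>(E'\<^sub>k) \<phi>\<^bsub>E\<^sub>k\<^esub>\<close> is asymptotically the same under \<open>\<mu>\<^sub>Y\<close> and \<open>\<mu>\<close>: moving \<open>j < n\<close>
  steps along the orbit changes this variable by at most \<open>\<mu>(E'\<^sub>k) n\<close> except on a set of measure
  \<open>\<le> n \<mu>(E\<^sub>k)\<close>, and averaging \<open>\<mu>(T\<^sup>-\<^sup>j Y \<inter> B)\<close> over \<open>j < n\<close> gives \<open>\<mu>(Y) \<mu>(B)\<close> up to the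
  \<open>L\<^sup>1\<close>-error of the ergodic theorem;
  (iii) \<open>\<phi>\<^sup>Y\<^bsub>E'\<^sub>k\<^esub>\<close> counts the visits to \<open>Y\<close> up to time \<open>\<phi>\<^bsub>E'\<^sub>k\<^esub>\<close>, which is large with high
  probability, so by Birkhoff's theorem it is \<open>\<approx> \<mu>(Y) \<phi>\<^bsub>E'\<^sub>k\<^esub>\<close>.
  Birkhoff's theorem for indicators is derived from the maximal ergodic theorem.
\<close>

section \<open>Hitting times\<close>

lemma funpow_apply_add: "(S ^^ i) ((S ^^ j) x) = (S ^^ (i + j)) x"
  unfolding funpow_add by simp

lemma hit_eq_enat_iff:
  "hit S A x = enat n \<longleftrightarrow> 1 \<le> n \<and> (S ^^ n) x \<in> A \<and> (\<forall>i. 1 \<le> i \<and> i < n \<longrightarrow> (S ^^ i) x \<notin> A)"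
proof
  assume h: "hit S A x = enat n"
  then have ex: "\<exists>n\<ge>1. (S ^^ n) x \<in> A"
    unfolding hit_def by (auto split: if_splits)
  with h have n: "n = (LEAST n. 1 \<le> n \<and> (S ^^ n) x \<in> A)"
    unfolding hit_def by auto
  show "1 \<le> n \<and> (S ^^ n) x \<in> A \<and> (\<forall>i. 1 \<le> i \<and> i < n \<longrightarrow> (S ^^ i) x \<notin> A)"
    using LeastI_ex[OF ex] not_less_Least unfolding n by blast
next
  assume h: "1 \<le> n \<and> (S ^^ n) x \<in> A \<and> (\<forall>i. 1 \<le> i \<and> i < n \<longrightarrow> (S ^^ i) x \<notin> A)"
  then have "(LEAST n. 1 \<le> n \<and> (S ^^ n) x \<in> A) = n"
    by (intro Least_equality) (auto simp: not_less[symmetric])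
  with h show "hit S A x = enat n"
    unfolding hit_def by auto
qed

lemma hit_eq_infinity_iff: "hit S A x = \<infinity> \<longleftrightarrow> (\<forall>n\<ge>1. (S ^^ n) x \<notin> A)"
  unfolding hit_def by auto

lemma hit_cases:
  obtains "hit S A x = \<infinity>" "\<forall>n\<ge>1. (S ^^ n) x \<notin> A"
  | n where "hit S A x = enat n" "1 \<le> n" "(S ^^ n) x \<in> A"
      "\<forall>i. 1 \<le> i \<and> i < n \<longrightarrow> (S ^^ i) x \<notin> A"
  by (cases "hit S A x") (auto simp: hit_eq_enat_iff hit_eq_infinity_iff)

lemma hit_le_enat_iff: "hit S A x \<le> enat j \<longleftrightarrow> (\<exists>i. 1 \<le> i \<and> i \<le> j \<and> (S ^^ i) x \<in> A)"
  by (cases rule: hit_cases[of S A x]) (auto simp: not_less[symmetric])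

lemma hit_funpow_shift:
  assumes "\<not> hit S A x \<le> enat j"
  shows "hit S A x = hit S A ((S ^^ j) x) + enat j"
proof (cases rule: hit_cases[of S A x])
  case 1
  then have "hit S A ((S ^^ j) x) = \<infinity>"
    by (auto simp: hit_eq_infinity_iff funpow_apply_add)
  with 1 show ?thesis by simp
next
  case (2 n)
  with assms have "j < n" by auto
  with 2 have "hit S A ((S ^^ j) x) = enat (n - j)"
    by (auto simp: hit_eq_enat_iff funpow_apply_add)
  with 2 \<open>j < n\<close> show ?thesis by simp
qed

lemma hit_funpow_shift_le:
  assumes "\<not> hit S A x \<le> enat j"
  shows "hit S A ((S ^^ j) x) \<le> hit S A x"
proof -
  have "hit S A ((S ^^ j) x) \<le> hit S A ((S ^^ j) x) + enat j"
    by simp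
  then show ?thesis
    using hit_funpow_shift[OF assms] by simp
qed

primrec visits :: "('a \<Rightarrow> 'a) \<Rightarrow> 'a set \<Rightarrow> 'a \<Rightarrow> nat \<Rightarrow> nat" where
  "visits S Y x 0 = 0"
| "visits S Y x (Suc n) = visits S Y x n + (if (S ^^ Suc n) x \<in> Y then 1 else 0)"

lemma visits_mono: "p \<le> q \<Longrightarrow> visits S Y x p \<le> visits S Y x q"
  by (induction q) (auto simp: le_Suc_eq)

lemma visits_strict_mono:
  assumes "p < q" "(S ^^ q) x \<in> Y"
  shows "visits S Y x p < visits S Y x q"
proof -
  obtain q' where q': "q = Suc q'" "p \<le> q'"
    using assms(1) by (cases q) auto
  then show ?thesis
    using visits_mono[OF q'(2), of S Y x] assms(2) by simp
qed

lemma visits_const: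
  "(\<And>i. r < i \<Longrightarrow> i \<le> r + l \<Longrightarrow> (S ^^ i) x \<notin> Y) \<Longrightarrow> visits S Y x (r + l) = visits S Y x r"
proof (induction l)
  case (Suc l)
  have "visits S Y x (r + l) = visits S Y x r"
    using Suc by simp
  moreover have "(S ^^ Suc (r + l)) x \<notin> Y"
    using Suc.prems[of "Suc (r + l)"] by simp
  ultimately show ?case
    by simp
qed simp

lemma return_map_step:
  assumes "hit S Y x = enat d"
  shows "return_map S Y x = (S ^^ d) x" "1 \<le> d" "(S ^^ d) x \<in> Y"
    "\<And>i. 1 \<le> i \<Longrightarrow> i < d \<Longrightarrow> (S ^^ i) x \<notin> Y"
  using assms hit_eq_enat_iff[of S Y x d] by (auto simp: return_map_def)

lemma return_map_funpow_eq_visit: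
  assumes inf: "\<forall>N. \<exists>n>N. (S ^^ n) x \<in> Y"
  shows "\<exists>r. (return_map S Y ^^ j) x = (S ^^ r) x \<and> visits S Y x r = j \<and> (1 \<le> j \<longrightarrow> (S ^^ r) x \<in> Y)"
proof (induction j)
  case 0
  show ?case by (intro exI[of _ 0]) auto
next
  case (Suc j)
  then obtain r where r: "(return_map S Y ^^ j) x = (S ^^ r) x" "visits S Y x r = j"
    by blast
  define y where "y = (S ^^ r) x"
  have y_iter: "(S ^^ i) y = (S ^^ (i + r)) x" for i
    by (simp add: y_def funpow_apply_add)
  from inf obtain n where "n > r" "(S ^^ n) x \<in> Y"
    by blast
  then have "(S ^^ (n - r)) y \<in> Y" "1 \<le> n - r"
    using y_iter[of "n - r"] by auto
  then have "hit S Y y \<noteq> \<infinity>"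
    unfolding hit_eq_infinity_iff by blast
  then obtain d where "hit S Y y = enat d"
    by auto
  note d = return_map_step[OF this]
  have "visits S Y x (r + (d - 1)) = visits S Y x r"
  proof (rule visits_const)
    fix i assume "r < i" "i \<le> r + (d - 1)"
    then have "(S ^^ (i - r)) y \<notin> Y"
      using d(2) by (intro d(4)) auto
    then show "(S ^^ i) x \<notin> Y"
      using y_iter[of "i - r"] \<open>r < i\<close> by simp
  qed
  moreover have "r + d = Suc (r + (d - 1))"
    using d(2) by simp
  moreover have "(S ^^ (r + d)) x \<in> Y"
    using d(3) y_iter[of d] by (simp add: add.commute)
  ultimately have "visits S Y x (r + d) = Suc j"
    using r(2) by (metis visits.simps(2) Suc_eq_plus1 if_True)
  moreover have "(return_map S Y ^^ Suc j) x = (S ^^ (r + d)) x"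
    using r(1) d(1) y_iter[of d] by (simp add: y_def add.commute)
  ultimately show ?case
    using \<open>(S ^^ (r + d)) x \<in> Y\<close> by blast
qed

lemma ind_hit_eq_visits:
  assumes inf: "\<forall>N. \<exists>n>N. (S ^^ n) x \<in> Y" and "E \<subseteq> Y" and h: "hit S E x = enat m"
  shows "hit (return_map S Y) E x = enat (visits S Y x m)"
proof -
  from h have m: "1 \<le> m" "(S ^^ m) x \<in> E" "\<forall>i. 1 \<le> i \<and> i < m \<longrightarrow> (S ^^ i) x \<notin> E"
    by (auto simp: hit_eq_enat_iff)
  define J where "J = visits S Y x m"
  have "1 \<le> J"
    unfolding J_def using visits_strict_mono[of 0 m S x Y] m \<open>E \<subseteq> Y\<close> by auto
  obtain r where r: "(return_map S Y ^^ J) x = (S ^^ r) x" "visits S Y x r = J" "(S ^^ r) x \<in> Y"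
    using return_map_funpow_eq_visit[OF inf, of J] \<open>1 \<le> J\<close> by blast
  have "r = m"
  proof (rule ccontr)
    assume "r \<noteq> m"
    then consider "r < m" | "m < r" by linarith
    then show False
      using visits_strict_mono[of r m S x Y] visits_strict_mono[of m r S x Y] r m \<open>E \<subseteq> Y\<close>
      unfolding J_def by cases auto
  qed
  show ?thesis
    unfolding hit_eq_enat_iff J_def[symmetric]
  proof (intro conjI allI impI)
    show "1 \<le> J" by fact
    show "(return_map S Y ^^ J) x \<in> E"
      using r \<open>r = m\<close> m by simp
    fix j assume j: "1 \<le> j \<and> j < J"
    obtain rj where rj: "(return_map S Y ^^ j) x = (S ^^ rj) x" "visits S Y x rj = j"
      using return_map_funpow_eq_visit[OF inf, of j] by blast
    have "rj \<noteq> 0"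
      using rj(2) j by (cases rj) auto
    moreover have "rj < m"
      using visits_mono[of m rj S Y x] rj(2) j unfolding J_def by linarith
    ultimately show "(return_map S Y ^^ j) x \<notin> E"
      using m(3) rj(1) by auto
  qed
qed

lemma funpow_measurable: "S \<in> M \<rightarrow>\<^sub>M M \<Longrightarrow> S ^^ n \<in> M \<rightarrow>\<^sub>M M"
  by (induction n) (auto intro: measurable_compose)

lemma hit_measurable:
  assumes S: "S \<in> M \<rightarrow>\<^sub>M M" and A[measurable]: "A \<in> sets M"
  shows "hit S A \<in> M \<rightarrow>\<^sub>M count_space UNIV"
  unfolding measurable_count_space_eq2_countable
proof (intro conjI ballI)
  note [measurable] = funpow_measurable[OF S]
  fix v :: enat
  show "hit S A -` {v} \<inter> space M \<in> sets M"
  proof (cases v)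
    case (enat n)
    then have "hit S A -` {v} \<inter> space M =
        {x\<in>space M. 1 \<le> n \<and> (S ^^ n) x \<in> A \<and> (\<forall>i. 1 \<le> i \<and> i < n \<longrightarrow> (S ^^ i) x \<notin> A)}"
      by (auto simp: hit_eq_enat_iff)
    then show ?thesis by simp
  next
    case infinity
    then have "hit S A -` {v} \<inter> space M = {x\<in>space M. \<forall>n. 1 \<le> n \<longrightarrow> (S ^^ n) x \<notin> A}"
      by (auto simp: hit_eq_infinity_iff)
    then show ?thesis by simp
  qed
qed auto

lemma sets_Collect_hit:
  assumes "S \<in> M \<rightarrow>\<^sub>M M" "A \<in> sets M"
  shows "{x\<in>space M. P (hit S A x)} \<in> sets M"
  using measurable_sets[OF hit_measurable[OF assms], of "{v. P v}"] by (simp add: vimage_def Int_def conj_commute)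

lemma sets_Collect_hit2:
  assumes S: "S \<in> M \<rightarrow>\<^sub>M M" and "A \<in> sets M" "B \<in> sets M"
  shows "{x\<in>space M. P (hit S A x) (hit S B x)} \<in> sets M"
proof -
  have "(\<lambda>x. P (hit S A x) (hit S B x)) \<in> M \<rightarrow>\<^sub>M count_space UNIV"
    by (rule measurable_compose_countable[OF _ hit_measurable[OF S \<open>A \<in> sets M\<close>]])
       (rule measurable_compose[OF hit_measurable[OF S \<open>B \<in> sets M\<close>]], simp)
  from measurable_sets[OF this, of "{True}"] show ?thesis
    by (simp add: vimage_def Int_def conj_commute)
qed

lemma return_map_measurable:
  assumes S: "S \<in> M \<rightarrow>\<^sub>M M" and Y: "Y \<in> sets M"
  shows "return_map S Y \<in> M \<rightarrow>\<^sub>M M"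
proof -
  have "(\<lambda>x. (\<lambda>i x. case i of enat n \<Rightarrow> (S ^^ n) x | \<infinity> \<Rightarrow> x) (hit S Y x) x) \<in> M \<rightarrow>\<^sub>M M"
  proof (rule measurable_compose_countable[OF _ hit_measurable[OF S Y]])
    fix i :: enat
    show "(\<lambda>x. case i of enat n \<Rightarrow> (S ^^ n) x | \<infinity> \<Rightarrow> x) \<in> M \<rightarrow>\<^sub>M M"
      by (cases i) (auto intro: funpow_measurable[OF S])
  qed
  then show ?thesis
    unfolding return_map_def by simp
qed

lemma scale_enat [simp]: "scale q (enat m) = ereal (q * real m)"
  by (simp add: scale_def)

lemma scale_infinity: "0 \<le> q \<Longrightarrow> scale q \<infinity> = (if q = 0 then 0 else \<infinity>)"
  by (simp add: scale_def)

lemma scale_add_enat: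
  assumes "0 \<le> q"
  shows "scale q (h + enat j) = scale q h + ereal (q * real j)"
  using assms by (cases h) (auto simp: scale_infinity algebra_simps)

lemma scale_mono:
  assumes "0 \<le> q" "h1 \<le> h2"
  shows "scale q h1 \<le> scale q h2"
proof (cases h2)
  case (enat m2)
  then obtain m1 where "h1 = enat m1" "m1 \<le> m2"
    using assms(2) by (cases h1) auto
  with enat assms(1) show ?thesis
    by (simp add: mult_left_mono)
qed (use assms(1) in \<open>cases h1; auto simp: scale_infinity\<close>)

lemma scale_le_if_scaled_diff_less:
  assumes "\<bar>scaled_diff q a b\<bar> < ereal \<delta>"
  shows "scale q a \<le> ereal t \<Longrightarrow> scale q b \<le> ereal (t + \<delta>)"
    and "scale q b \<le> ereal t \<Longrightarrow> scale q a \<le> ereal (t + \<delta>)"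
proof -
  obtain m n where mn: "a = enat m" "b = enat n"
    using assms by (cases a; cases b) (auto simp: scaled_diff_def)
  then have "\<bar>q * real m - q * real n\<bar> < \<delta>"
    using assms by (auto simp: scaled_diff_def algebra_simps)
  then show "scale q a \<le> ereal t \<Longrightarrow> scale q b \<le> ereal (t + \<delta>)"
    and "scale q b \<le> ereal t \<Longrightarrow> scale q a \<le> ereal (t + \<delta>)"
    using mn by auto
qed

lemma small_margin_exists:
  fixes \<delta> K :: real
  assumes "0 < \<delta>"
  obtains \<rho> where "0 < \<rho>" "\<rho> \<le> 1 / 2" "\<rho> * (2 * (\<bar>K\<bar> + 1)) \<le> \<delta>"
proof
  let ?\<rho> = "min (1 / 2) (\<delta> / (2 * (\<bar>K\<bar> + 1)))"
  have K: "0 < 2 * (\<bar>K\<bar> + 1)"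
    by simp
  have "?\<rho> * (2 * (\<bar>K\<bar> + 1)) \<le> \<delta> / (2 * (\<bar>K\<bar> + 1)) * (2 * (\<bar>K\<bar> + 1))"
    using K by (intro mult_right_mono) auto
  with K show "?\<rho> * (2 * (\<bar>K\<bar> + 1)) \<le> \<delta>"
    by simp
  show "0 < ?\<rho>"
    using K assms by (simp add: min_less_iff_conj)
  show "?\<rho> \<le> 1 / 2"
    by (rule min.cobounded1)
qed

lemma rescaled_count_close:
  fixes c q s t K \<delta> \<rho> :: real and m :: nat
  assumes "0 < c" "0 \<le> q" "0 < m" "\<bar>s / m - c\<bar> \<le> c * \<rho>"
    and "0 < \<rho>" "\<rho> \<le> 1 / 2" "\<rho> * (2 * (\<bar>K\<bar> + 1)) \<le> \<delta>" "\<bar>t\<bar> \<le> K"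
  shows "q / c * s \<le> t \<Longrightarrow> q * m \<le> t + \<delta>"
    and "q * m \<le> t \<Longrightarrow> q / c * s \<le> t + \<delta>"
proof -
  define u where "u = q * m"
  have "\<bar>s - c * m\<bar> = \<bar>s / m - c\<bar> * m"
    using assms(3) by (simp add: field_simps abs_mult[symmetric])
  also have "\<dots> \<le> c * \<rho> * m"
    using assms(4) by (intro mult_right_mono) auto
  finally have dev: "\<bar>s - c * m\<bar> \<le> c * \<rho> * m" .
  have "s \<le> c * m + c * \<rho> * m" "c * m - c * \<rho> * m \<le> s"
    using dev unfolding abs_le_iff by linarith+
  moreover have "0 \<le> q / c"
    using assms(1,2) by simp
  ultimately have "q / c * s \<le> q / c * (c * m + c * \<rho> * m)" "q / c * (c * m - c * \<rho> * m) \<le> q / c * s"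
    by (metis mult_left_mono)+
  moreover have "q / c * (c * m + c * \<rho> * m) = u + \<rho> * u" "q / c * (c * m - c * \<rho> * m) = u - \<rho> * u"
    using assms(1) by (simp_all add: u_def field_simps)
  ultimately have up: "q / c * s \<le> u + \<rho> * u" and lo: "u - \<rho> * u \<le> q / c * s"
    by simp_all
  have "0 \<le> u"
    using assms(2) by (simp add: u_def)
  then have "\<rho> * u \<le> u / 2"
    using mult_right_mono[OF assms(6), of u] by simp
  have bound: "\<rho> * u \<le> \<delta>" if "u \<le> 2 * (\<bar>K\<bar> + 1)"
    using mult_left_mono[OF that, of \<rho>] assms(5,7) by linarith
  show "q * m \<le> t + \<delta>" if "q / c * s \<le> t"
  proof -
    have "u \<le> 2 * (\<bar>K\<bar> + 1)"
      using that lo \<open>\<rho> * u \<le> u / 2\<close> assms(8) abs_ge_self[of t] abs_ge_self[of K] by argo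
    with that lo bound show ?thesis
      by (simp add: u_def)
  qed
  show "q / c * s \<le> t + \<delta>" if "q * m \<le> t"
  proof -
    have "u \<le> 2 * (\<bar>K\<bar> + 1)"
      using that assms(8) abs_ge_self[of t] abs_ge_self[of K] by (simp add: u_def)
    with that up bound show ?thesis
      by (simp add: u_def)
  qed
qed

lemma (in prob_space) integral_ge_indicator_integral:
  assumes [measurable]: "g \<in> borel_measurable M" "P \<in> sets M"
    and bound: "\<And>x. x \<in> space M \<Longrightarrow> \<bar>g x\<bar> \<le> C"
  shows "(\<integral>x. indicator P x * g x \<partial>M) - C * (1 - prob P) \<le> (\<integral>x. g x \<partial>M)"
proof -
  have int_g: "integrable M g"
    using bound by (intro integrable_const_bound[of _ C]) auto
  have int_P: "integrable M (\<lambda>x. indicator P x * g x)"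
    using integrable_mult_indicator[OF _ int_g] by simp
  have int_compl: "integrable M (\<lambda>x. indicator (space M - P) x * g x)"
    using integrable_mult_indicator[OF _ int_g, of "space M - P"] by simp
  have "(\<integral>x. g x \<partial>M) = (\<integral>x. indicator P x * g x + indicator (space M - P) x * g x \<partial>M)"
    by (intro Bochner_Integration.integral_cong) (auto simp: indicator_def)
  also have "\<dots> = (\<integral>x. indicator P x * g x \<partial>M) + (\<integral>x. indicator (space M - P) x * g x \<partial>M)"
    using int_P int_compl by simp
  also have "(\<integral>x. indicator (space M - P) x * g x \<partial>M) \<ge> (\<integral>x. - C * indicator (space M - P) x \<partial>M)"
  proof (rule integral_mono)
    fix x assume "x \<in> space M"
    then show "- C * indicator (space M - P) x \<le> indicator (space M - P) x * g x"
      using bound[of x] by (auto simp: indicator_def)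
  qed (use int_compl integrable_mult_indicator[OF _ integrable_const[of "- C"], of "space M - P"]
      in \<open>auto simp: mult.commute\<close>)
  moreover have "(\<integral>x. - C * indicator (space M - P) x \<partial>M) = - C * (1 - prob P)"
    by (simp add: prob_compl)
  ultimately show ?thesis
    by linarith
qed

lemma (in prob_space) measure_deviation_tendsto_0:
  fixes u :: "nat \<Rightarrow> 'a \<Rightarrow> real"
  assumes [measurable]: "\<And>n. u n \<in> borel_measurable M"
    and lim: "AE x in M. (\<lambda>n. u n x) \<longlonglongrightarrow> l" and "0 < e"
  shows "(\<lambda>N. prob {x\<in>space M. \<exists>n\<ge>N. e < \<bar>u n x - l\<bar>}) \<longlonglongrightarrow> 0"
proof -
  define Z where "Z N = {x\<in>space M. \<exists>n\<ge>N. e < \<bar>u n x - l\<bar>}" for N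
  have [measurable]: "Z N \<in> sets M" for N
    unfolding Z_def by measurable
  have "decseq Z"
    unfolding decseq_def Z_def by auto (meson order_trans)
  then have "(\<lambda>N. prob (Z N)) \<longlonglongrightarrow> prob (\<Inter>N. Z N)"
    by (intro finite_Lim_measure_decseq) auto
  moreover have "AE x in M. x \<notin> (\<Inter>N. Z N)"
    using lim
  proof eventually_elim
    case (elim x)
    have "\<forall>\<^sub>F n in sequentially. \<bar>u n x - l\<bar> < e"
      using tendstoD[OF elim \<open>0 < e\<close>] by (simp add: dist_real_def)
    then obtain N where "\<forall>n\<ge>N. \<bar>u n x - l\<bar> < e"
      unfolding eventually_sequentially by blast
    then have "x \<notin> Z N"
      unfolding Z_def by (auto simp: not_less)
    then show ?case
      by blast
  qed
  then have "prob (\<Inter>N. Z N) = 0"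
    using prob_eq_0[of "\<Inter>N. Z N"] by simp
  ultimately show ?thesis
    unfolding Z_def by simp
qed

section \<open>Ergodic systems\<close>

locale ergodic_system = prob_space M for M :: "'a measure" +
  fixes T :: "'a \<Rightarrow> 'a"
  assumes T_measurable [measurable]: "T \<in> M \<rightarrow>\<^sub>M M"
    and T_preserving: "distr M M T = M"
    and T_ergodic: "\<And>A. A \<in> sets M \<Longrightarrow> T -` A \<inter> space M = A \<Longrightarrow> prob A = 0 \<or> prob A = 1"

lemma ergodic_system_if_ergodic_pps: "ergodic_pps M T \<Longrightarrow> ergodic_system M T"
  unfolding ergodic_pps_def mpt_def ergodic_system_def ergodic_system_axioms_def by blast

context ergodic_system
begin

lemma funpow_T_measurable [measurable]: "T ^^ n \<in> M \<rightarrow>\<^sub>M M"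
  by (rule funpow_measurable[OF T_measurable])

lemma funpow_T_space: "x \<in> space M \<Longrightarrow> (T ^^ n) x \<in> space M"
  using measurable_space[OF funpow_T_measurable] by blast

lemma distr_funpow_T: "distr M M (T ^^ n) = M"
proof (induction n)
  case (Suc n)
  have "distr M M (T ^^ Suc n) = distr (distr M M (T ^^ n)) M T"
    by (subst distr_distr) auto
  with Suc T_preserving show ?case
    by (simp add: comp_def)
qed (simp add: distr_id2 id_def)

lemma measure_funpow_vimage: "A \<in> sets M \<Longrightarrow> prob ((T ^^ n) -` A \<inter> space M) = prob A"
  by (metis distr_funpow_T funpow_T_measurable measure_distr)

lemma measure_T_vimage: "A \<in> sets M \<Longrightarrow> prob (T -` A \<inter> space M) = prob A"
  by (metis T_preserving T_measurable measure_distr)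

lemma integral_comp_T:
  "f \<in> borel_measurable M \<Longrightarrow> (\<integral>x. f (T x) \<partial>M) = (\<integral>x. f x \<partial>M :: real)"
  by (metis T_preserving T_measurable integral_distr)

lemma AE_in_invariant_set:
  assumes "A \<in> sets M" "T -` A \<inter> space M = A" "prob A > 0"
  shows "AE x in M. x \<in> A"
  using T_ergodic[OF assms(1,2)] assms(3) prob_eq_1[OF assms(1)] by auto

lemma visits_from_Suc:
  "{x\<in>space M. \<exists>n\<ge>Suc m. (T ^^ n) x \<in> A} = T -` {x\<in>space M. \<exists>n\<ge>m. (T ^^ n) x \<in> A} \<inter> space M"
proof -
  have "(\<exists>n\<ge>Suc m. P n) \<longleftrightarrow> (\<exists>n\<ge>m. P (Suc n))" for P
    by (metis Suc_le_D Suc_le_mono)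
  moreover have "(T ^^ Suc n) x = (T ^^ n) (T x)" for n x
    by (simp add: funpow_swap1)
  ultimately show ?thesis
    by (auto simp del: funpow.simps simp: measurable_space[OF T_measurable])
qed

lemma measure_visits_from:
  assumes [measurable]: "A \<in> sets M"
  shows "prob {x\<in>space M. \<exists>n\<ge>m. (T ^^ n) x \<in> A} = prob {x\<in>space M. \<exists>n. (T ^^ n) x \<in> A}"
proof (induction m)
  case (Suc m)
  have "prob {x\<in>space M. \<exists>n\<ge>Suc m. (T ^^ n) x \<in> A} = prob {x\<in>space M. \<exists>n\<ge>m. (T ^^ n) x \<in> A}"
    unfolding visits_from_Suc by (rule measure_T_vimage) measurable
  with Suc show ?case
    by simp
qed simp

text \<open>Poincare recurrence, upgraded by ergodicity: the set of points visiting \<open>A\<close> infinitely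
  often is invariant and has the measure of the set of points visiting \<open>A\<close> at all.\<close>

lemma AE_visits_infinitely_often:
  assumes [measurable]: "A \<in> sets M" and "prob A > 0"
  shows "AE x in M. \<forall>N. \<exists>n>N. (T ^^ n) x \<in> A"
proof -
  define U where "U m = {x\<in>space M. \<exists>n\<ge>m. (T ^^ n) x \<in> A}" for m
  have [measurable]: "U m \<in> sets M" for m
    unfolding U_def by measurable
  have "decseq U"
    unfolding decseq_def U_def by (auto intro: order_trans)
  then have "(\<lambda>m. prob (U m)) \<longlonglongrightarrow> prob (\<Inter>m. U m)"
    by (intro finite_Lim_measure_decseq) auto
  moreover have "(\<lambda>m. prob (U m)) \<longlonglongrightarrow> prob (U 0)"
    unfolding U_def by (simp add: measure_visits_from)
  ultimately have "prob (\<Inter>m. U m) = prob (U 0)"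
    by (rule LIMSEQ_unique)
  also have "prob (U 0) \<ge> prob A"
    using sets.sets_into_space[of A M] by (intro finite_measure_mono) (auto simp: U_def intro: exI[of _ 0])
  finally have "prob (\<Inter>m. U m) > 0"
    using assms(2) by linarith
  moreover have "T -` (\<Inter>m. U m) \<inter> space M = (\<Inter>m. U m)"
  proof -
    have "T -` (\<Inter>m. U m) \<inter> space M = (\<Inter>m. U (Suc m))"
      unfolding U_def visits_from_Suc by auto
    also have "\<dots> = (\<Inter>m. U m)"
      using decseq_SucD[OF \<open>decseq U\<close>] by (blast intro: INT_I)
    finally show ?thesis .
  qed
  ultimately have "AE x in M. x \<in> (\<Inter>m. U m)"
    by (intro AE_in_invariant_set) auto
  then show ?thesis
    by eventually_elim (auto simp: U_def Suc_le_eq, metis Suc_le_eq)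
qed

lemma hit_finite_AE:
  assumes "A \<in> sets M" "prob A > 0"
  shows "AE x in M. hit T A x \<noteq> \<infinity>"
  using AE_visits_infinitely_often[OF assms]
  by eventually_elim (auto simp: hit_eq_infinity_iff Suc_le_eq)

lemma sets_Collect_hit_T: "A \<in> sets M \<Longrightarrow> {x\<in>space M. P (hit T A x)} \<in> sets M"
  by (rule sets_Collect_hit[OF T_measurable])

lemma measure_UN_preimages_le:
  assumes "A \<in> sets M" "finite I"
  shows "prob (\<Union>m\<in>I. (T ^^ m) -` A \<inter> space M) \<le> card I * prob A"
proof -
  have "prob (\<Union>m\<in>I. (T ^^ m) -` A \<inter> space M) \<le> (\<Sum>m\<in>I. prob ((T ^^ m) -` A \<inter> space M))"
    using assms by (intro finite_measure_subadditive_finite) auto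
  also have "\<dots> = card I * prob A"
    using assms by (simp add: measure_funpow_vimage)
  finally show ?thesis .
qed

lemma measure_hit_le:
  assumes "A \<in> sets M"
  shows "prob {x\<in>space M. hit T A x \<le> enat j} \<le> j * prob A"
proof -
  have "{x\<in>space M. hit T A x \<le> enat j} = (\<Union>i\<in>{1..j}. (T ^^ i) -` A \<inter> space M)"
    unfolding hit_le_enat_iff by force
  then show ?thesis
    using measure_UN_preimages_le[OF assms, of "{1..j}"] by simp
qed

subsection \<open>A Kac-type inequality\<close>

definition returns_into :: "'a set \<Rightarrow> 'a set \<Rightarrow> nat \<Rightarrow> 'a set" where
  "returns_into A B m = {x\<in>space M. x \<in> A \<and> hit T A x = enat m \<and> (T ^^ m) x \<in> B}"

lemma returns_into_measurable [measurable]: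
  assumes [measurable]: "A \<in> sets M" "B \<in> sets M"
  shows "returns_into A B m \<in> sets M"
proof -
  have "returns_into A B m = {x\<in>space M. hit T A x = enat m} \<inter> A \<inter> ((T ^^ m) -` B \<inter> space M)"
    unfolding returns_into_def by auto
  then show ?thesis
    using sets_Collect_hit_T[of A "\<lambda>h. h = enat m"] by auto
qed

text \<open>Decomposition according to the last visit to \<open>A\<close> before time \<open>n\<close>.\<close>

lemma funpow_vimage_subset_last_visit:
  assumes "B \<subseteq> A"
  shows "(T ^^ n) -` B \<inter> space M \<subseteq>
    {x\<in>space M. \<forall>i<n. (T ^^ i) x \<notin> A} \<union> (\<Union>i<n. (T ^^ i) -` returns_into A B (n - i) \<inter> space M)"
proof
  fix x assume x: "x \<in> (T ^^ n) -` B \<inter> space M"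
  show "x \<in> {x\<in>space M. \<forall>i<n. (T ^^ i) x \<notin> A} \<union> (\<Union>i<n. (T ^^ i) -` returns_into A B (n - i) \<inter> space M)"
  proof (cases "\<exists>i<n. (T ^^ i) x \<in> A")
    case True
    define I where "I = {i. i < n \<and> (T ^^ i) x \<in> A}"
    have "finite I" "I \<noteq> {}"
      using True unfolding I_def by auto
    define i0 where "i0 = Max I"
    have i0: "i0 < n" "(T ^^ i0) x \<in> A" and i0_max: "\<And>i. i < n \<Longrightarrow> (T ^^ i) x \<in> A \<Longrightarrow> i \<le> i0"
      using Max_in[OF \<open>finite I\<close> \<open>I \<noteq> {}\<close>] Max_ge[OF \<open>finite I\<close>] unfolding i0_def I_def by auto
    have iter: "(T ^^ l) ((T ^^ i0) x) = (T ^^ (l + i0)) x" for l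
      by (rule funpow_apply_add)
    have "hit T A ((T ^^ i0) x) = enat (n - i0)"
      unfolding hit_eq_enat_iff iter
    proof (intro conjI allI impI)
      show "(T ^^ (n - i0 + i0)) x \<in> A"
        using i0 x assms by auto
      fix l assume "1 \<le> l \<and> l < n - i0"
      then have "l + i0 < n" "\<not> l + i0 \<le> i0"
        by linarith+
      then show "(T ^^ (l + i0)) x \<notin> A"
        using i0_max[of "l + i0"] by blast
    qed (use i0 in simp)
    then have "(T ^^ i0) x \<in> returns_into A B (n - i0)"
      using i0 x funpow_T_space by (auto simp: returns_into_def iter)
    with i0 x show ?thesis
      by auto
  qed (use x in auto)
qed

lemma measure_le_avoid_plus_returns_into:
  assumes [measurable]: "A \<in> sets M" "B \<in> sets M" and "B \<subseteq> A"
  shows "prob B \<le> prob {x\<in>space M. \<forall>i<n. (T ^^ i) x \<notin> A} + prob (\<Union>m. returns_into A B m)"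
proof -
  let ?W = "{x\<in>space M. \<forall>i<n. (T ^^ i) x \<notin> A}"
  have "prob B = prob ((T ^^ n) -` B \<inter> space M)"
    by (simp add: measure_funpow_vimage)
  also have "\<dots> \<le> prob (?W \<union> (\<Union>i<n. (T ^^ i) -` returns_into A B (n - i) \<inter> space M))"
    using funpow_vimage_subset_last_visit[OF \<open>B \<subseteq> A\<close>, of n] by (intro finite_measure_mono) auto
  also have "\<dots> \<le> prob ?W + (\<Sum>i<n. prob ((T ^^ i) -` returns_into A B (n - i) \<inter> space M))"
    by (intro order_trans[OF measure_Un_le] add_left_mono finite_measure_subadditive_finite) auto
  also have "(\<Sum>i<n. prob ((T ^^ i) -` returns_into A B (n - i) \<inter> space M))
      = prob (\<Union>i<n. returns_into A B (n - i))"
    by (subst finite_measure_finite_Union)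
       (auto simp del: returns_into_measurable simp: measure_funpow_vimage disjoint_family_on_def,
        auto simp: returns_into_def)
  also have "\<dots> \<le> prob (\<Union>m. returns_into A B m)"
    by (intro finite_measure_mono) auto
  finally show ?thesis
    by simp
qed

lemma measure_avoid_tendsto_0:
  assumes [measurable]: "A \<in> sets M" and "prob A > 0"
  shows "(\<lambda>n. prob {x\<in>space M. \<forall>i<n. (T ^^ i) x \<notin> A}) \<longlonglongrightarrow> 0"
proof -
  define W where "W n = {x\<in>space M. \<forall>i<n. (T ^^ i) x \<notin> A}" for n
  have [measurable]: "W n \<in> sets M" for n
    unfolding W_def by measurable
  have "decseq W"
    unfolding decseq_def W_def by auto
  then have "(\<lambda>n. prob (W n)) \<longlonglongrightarrow> prob (\<Inter>n. W n)"
    by (intro finite_Lim_measure_decseq) auto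
  moreover have "AE x in M. x \<notin> (\<Inter>n. W n)"
    using hit_finite_AE[OF assms]
    by eventually_elim (auto simp: W_def hit_eq_enat_iff)
  then have "prob (\<Inter>n. W n) = 0"
    by (subst prob_eq_0) auto
  ultimately show ?thesis
    by (simp add: W_def)
qed

lemma measure_le_measure_returns_into:
  assumes [measurable]: "A \<in> sets M" "B \<in> sets M" and "B \<subseteq> A" "prob A > 0"
  shows "prob B \<le> prob (\<Union>m. returns_into A B m)"
proof (rule LIMSEQ_le_const)
  show "(\<lambda>n. prob {x\<in>space M. \<forall>i<n. (T ^^ i) x \<notin> A} + prob (\<Union>m. returns_into A B m))
      \<longlonglongrightarrow> prob (\<Union>m. returns_into A B m)"
    using tendsto_add[OF measure_avoid_tendsto_0[OF assms(1,4)] tendsto_const] by simp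
qed (use measure_le_avoid_plus_returns_into[OF assms(1-3)] in auto)

end

section \<open>Birkhoff's ergodic theorem for indicators\<close>

text \<open>The margin ranges over \<open>1 / (m + 1)\<close> rather than over all positive reals so that, for a
  measurable family of sequences, the set where the rate is exceeded is measurable.\<close>

definition exceeds_rate :: "real \<Rightarrow> (nat \<Rightarrow> real) \<Rightarrow> bool" where
  "exceeds_rate c a \<longleftrightarrow> (\<exists>m::nat. \<forall>N. \<exists>n\<ge>N. (c + 1 / Suc m) * n < a n)"

lemma exceeds_rate_iff: "exceeds_rate c a \<longleftrightarrow> (\<exists>d>0. \<forall>N. \<exists>n\<ge>N. (c + d) * n < a n)"
proof
  assume "exceeds_rate c a"
  then obtain m :: nat where "\<forall>N. \<exists>n\<ge>N. (c + 1 / Suc m) * n < a n"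
    unfolding exceeds_rate_def by blast
  then show "\<exists>d>0. \<forall>N. \<exists>n\<ge>N. (c + d) * n < a n"
    by (intro exI[of _ "1 / Suc m"]) auto
next
  assume "\<exists>d>0. \<forall>N. \<exists>n\<ge>N. (c + d) * n < a n"
  then obtain d where d: "0 < d" "\<forall>N. \<exists>n\<ge>N. (c + d) * n < a n"
    by blast
  obtain m :: nat where "1 / Suc m < d"
    using nat_approx_posE[OF d(1)] by blast
  then have "(c + 1 / Suc m) * n \<le> (c + d) * n" for n :: nat
    by (intro mult_right_mono) auto
  with d(2) show "exceeds_rate c a"
    unfolding exceeds_rate_def by (meson le_less_trans)
qed

lemma frequently_above_shift:
  fixes a b :: "nat \<Rightarrow> real"
  assumes freq: "\<forall>N. \<exists>n\<ge>N. (c + d) * n < b n" and "0 < d" and le: "\<And>n. b n \<le> a (Suc n)"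
  shows "\<forall>N. \<exists>n\<ge>N. (c + d / 2) * n < a n"
proof
  fix N
  obtain K :: nat where K: "(2 * c + d) / d < K"
    using reals_Archimedean2 by blast
  obtain n where n: "max N K \<le> n" "(c + d) * n < b n"
    using freq by blast
  have "2 * c + d < K * d"
    using K \<open>0 < d\<close> by (simp add: pos_divide_less_eq)
  also have "\<dots> \<le> n * d"
    using n(1) \<open>0 < d\<close> by (intro mult_right_mono) auto
  finally have "2 * c + d < n * d" .
  moreover have "(c + d / 2) * Suc n = c * n + d * n / 2 + c + d / 2"
    by (simp add: algebra_simps)
  ultimately have "(c + d / 2) * Suc n < a (Suc n)"
    using n(2) le[of n] by (simp add: field_simps)
  then show "\<exists>n\<ge>N. (c + d / 2) * n < a n"
    using n(1) by (intro exI[of _ "Suc n"]) auto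
qed

lemma frequently_above_unshift:
  fixes a b :: "nat \<Rightarrow> real"
  assumes freq: "\<forall>N. \<exists>n\<ge>N. (c + d) * n < a n" and "0 < d" and le: "\<And>n. a (Suc n) \<le> b n + 1"
  shows "\<forall>N. \<exists>n\<ge>N. (c + d / 2) * n < b n"
proof
  fix N
  obtain K :: nat where K: "2 * (1 - c - d) / d < K"
    using reals_Archimedean2 by blast
  obtain n where n: "Suc (max N K) \<le> n" "(c + d) * n < a n"
    using freq by blast
  then obtain n' where n': "n = Suc n'" "max N K \<le> n'"
    by (cases n) auto
  have "2 * (1 - c - d) < K * d"
    using K \<open>0 < d\<close> by (simp add: pos_divide_less_eq)
  also have "\<dots> \<le> n' * d"
    using n'(2) \<open>0 < d\<close> by (intro mult_right_mono) auto
  finally have "2 * (1 - c - d) < n' * d" .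
  moreover have "(c + d) * Suc n' = c * n' + d * n' + c + d"
    by (simp add: algebra_simps)
  ultimately have "(c + d / 2) * n' < b n'"
    using n(2) le[of n'] unfolding n'(1) by (simp add: algebra_simps)
  then show "\<exists>n\<ge>N. (c + d / 2) * n < b n"
    using n'(2) by (intro exI[of _ n']) auto
qed

lemma exceeds_rate_shift_iff:
  fixes a b :: "nat \<Rightarrow> real"
  assumes "\<And>n. b n \<le> a (Suc n)" "\<And>n. a (Suc n) \<le> b n + 1"
  shows "exceeds_rate c a \<longleftrightarrow> exceeds_rate c b"
  unfolding exceeds_rate_iff
proof
  assume "\<exists>d>0. \<forall>N. \<exists>n\<ge>N. (c + d) * n < a n"
  then show "\<exists>d>0. \<forall>N. \<exists>n\<ge>N. (c + d) * n < b n"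
    using frequently_above_unshift[of c _ a b] assms(2) by (metis half_gt_zero)
next
  assume "\<exists>d>0. \<forall>N. \<exists>n\<ge>N. (c + d) * n < b n"
  then show "\<exists>d>0. \<forall>N. \<exists>n\<ge>N. (c + d) * n < a n"
    using frequently_above_shift[of c _ b a] assms(1) by (metis half_gt_zero)
qed

context ergodic_system
begin

definition birkhoff_sum :: "('a \<Rightarrow> real) \<Rightarrow> nat \<Rightarrow> 'a \<Rightarrow> real" where
  "birkhoff_sum g n x = (\<Sum>i<n. g ((T ^^ i) x))"

lemma birkhoff_sum_0 [simp]: "birkhoff_sum g 0 x = 0"
  by (simp add: birkhoff_sum_def)

lemma birkhoff_sum_Suc: "birkhoff_sum g (Suc n) x = g x + birkhoff_sum g n (T x)"
  unfolding birkhoff_sum_def by (subst sum.lessThan_Suc_shift) (simp add: funpow_swap1)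

lemma birkhoff_sum_measurable [measurable]:
  assumes [measurable]: "g \<in> borel_measurable M"
  shows "birkhoff_sum g n \<in> borel_measurable M"
  unfolding birkhoff_sum_def by measurable

lemma abs_birkhoff_sum_le:
  assumes "\<And>x. x \<in> space M \<Longrightarrow> \<bar>g x\<bar> \<le> C" "x \<in> space M"
  shows "\<bar>birkhoff_sum g n x\<bar> \<le> n * C"
proof -
  have "\<bar>birkhoff_sum g n x\<bar> \<le> (\<Sum>i<n. \<bar>g ((T ^^ i) x)\<bar>)"
    unfolding birkhoff_sum_def by (rule sum_abs)
  also have "\<dots> \<le> (\<Sum>i<n. C)"
    using assms funpow_T_space by (intro sum_mono) auto
  finally show ?thesis
    by simp
qed

lemma birkhoff_sum_indicator_bounds:
  "0 \<le> birkhoff_sum (indicator A) n x" "birkhoff_sum (indicator A) n x \<le> n"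
proof -
  show "0 \<le> birkhoff_sum (indicator A) n x"
    unfolding birkhoff_sum_def by (intro sum_nonneg) auto
  have "birkhoff_sum (indicator A) n x \<le> of_nat (card {..<n}) * 1"
    unfolding birkhoff_sum_def by (intro sum_bounded_above) (auto simp: indicator_def)
  then show "birkhoff_sum (indicator A) n x \<le> n"
    by simp
qed

lemma visits_eq_birkhoff_sum: "real (visits T Y x n) = birkhoff_sum (indicator Y) n (T x)"
proof (induction n)
  case (Suc n)
  have "(T ^^ n) (T x) = (T ^^ Suc n) x"
    by (simp only: funpow_Suc_right comp_apply)
  with Suc show ?case
    by (simp add: birkhoff_sum_def indicator_def del: funpow.simps)
qed simp

subsection \<open>The maximal ergodic theorem\<close>

primrec birkhoff_max :: "('a \<Rightarrow> real) \<Rightarrow> nat \<Rightarrow> 'a \<Rightarrow> real" where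
  "birkhoff_max g 0 x = 0"
| "birkhoff_max g (Suc N) x = max (birkhoff_max g N x) (birkhoff_sum g (Suc N) x)"

lemma birkhoff_max_measurable [measurable]:
  assumes [measurable]: "g \<in> borel_measurable M"
  shows "birkhoff_max g N \<in> borel_measurable M"
proof (induction N)
  case (Suc N)
  note [measurable] = Suc
  have "birkhoff_max g (Suc N) = (\<lambda>x. max (birkhoff_max g N x) (birkhoff_sum g (Suc N) x))"
    by auto
  then show ?case
    by simp
qed simp

lemma birkhoff_max_nonneg: "0 \<le> birkhoff_max g N x"
  by (induction N) auto

lemma birkhoff_sum_le_max: "n \<le> N \<Longrightarrow> birkhoff_sum g n x \<le> birkhoff_max g N x"
  by (induction N) (auto simp: le_Suc_eq)

lemma birkhoff_max_attained:
  "birkhoff_max g N x = 0 \<or> (\<exists>n. 1 \<le> n \<and> n \<le> N \<and> birkhoff_max g N x = birkhoff_sum g n x)"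
  by (induction N) (auto simp: max_def)

lemma birkhoff_max_le_Suc:
  assumes "0 < birkhoff_max g N x"
  shows "birkhoff_max g N x \<le> g x + birkhoff_max g N (T x)"
proof -
  obtain n where n: "1 \<le> n" "n \<le> N" "birkhoff_max g N x = birkhoff_sum g n x"
    using birkhoff_max_attained[of g N x] assms by auto
  then obtain n' where "n = Suc n'"
    by (cases n) auto
  with n birkhoff_sum_le_max[of n' N g "T x"] show ?thesis
    by (simp add: birkhoff_sum_Suc)
qed

lemma abs_birkhoff_max_le:
  assumes "\<And>x. x \<in> space M \<Longrightarrow> \<bar>g x\<bar> \<le> C" "x \<in> space M"
  shows "\<bar>birkhoff_max g N x\<bar> \<le> N * C"
proof (induction N)
  case (Suc N)
  have "0 \<le> C"
    using assms by (metis abs_ge_zero order_trans)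
  then have "N * C \<le> Suc N * C"
    by (simp add: mult_right_mono)
  moreover have "\<bar>birkhoff_sum g (Suc N) x\<bar> \<le> Suc N * C"
    by (rule abs_birkhoff_sum_le[OF assms])
  ultimately show ?case
    using Suc birkhoff_max_nonneg[of g N x]
    by (auto simp: max_def)
qed simp

lemma maximal_ergodic_inequality:
  assumes [measurable]: "g \<in> borel_measurable M" and bound: "\<And>x. x \<in> space M \<Longrightarrow> \<bar>g x\<bar> \<le> C"
  shows "0 \<le> (\<integral>x. indicator {x\<in>space M. 0 < birkhoff_max g N x} x * g x \<partial>M)"
proof -
  let ?P = "{x\<in>space M. 0 < birkhoff_max g N x}"
  have int_max: "integrable M (birkhoff_max g N)"
    using abs_birkhoff_max_le[OF bound] by (intro integrable_const_bound[of _ "N * C"]) auto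
  have int_max_T: "integrable M (\<lambda>x. birkhoff_max g N (T x))"
    using abs_birkhoff_max_le[OF bound] measurable_space[OF T_measurable]
    by (intro integrable_const_bound[of _ "N * C"]) auto
  have int_g: "integrable M g"
    using bound by (intro integrable_const_bound[of _ C]) auto
  have "0 = (\<integral>x. birkhoff_max g N x \<partial>M) - (\<integral>x. birkhoff_max g N (T x) \<partial>M)"
    by (simp add: integral_comp_T)
  also have "\<dots> = (\<integral>x. birkhoff_max g N x - birkhoff_max g N (T x) \<partial>M)"
    using int_max int_max_T by simp
  also have "\<dots> \<le> (\<integral>x. indicator ?P x * g x \<partial>M)"
  proof (rule integral_mono)
    fix x assume "x \<in> space M"
    then show "birkhoff_max g N x - birkhoff_max g N (T x) \<le> indicator ?P x * g x"
      using birkhoff_max_le_Suc[of g N x] birkhoff_max_nonneg[of g N x] birkhoff_max_nonneg[of g N "T x"]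
      by (cases "0 < birkhoff_max g N x") (auto simp: indicator_def)
  qed (use int_max int_max_T integrable_mult_indicator[OF _ int_g, of ?P] in auto)
  finally show ?thesis .
qed

lemma integral_nonneg_if_birkhoff_sum_pos_AE:
  assumes [measurable]: "g \<in> borel_measurable M" and bound: "\<And>x. x \<in> space M \<Longrightarrow> \<bar>g x\<bar> \<le> C"
    and pos: "prob {x\<in>space M. \<exists>n. 0 < birkhoff_sum g n x} = 1"
  shows "0 \<le> (\<integral>x. g x \<partial>M)"
proof -
  define P where "P N = {x\<in>space M. 0 < birkhoff_max g N x}" for N
  have [measurable]: "P N \<in> sets M" for N
    unfolding P_def by measurable
  have "incseq P"
    by (rule incseq_SucI) (auto simp: P_def)
  then have "(\<lambda>N. prob (P N)) \<longlonglongrightarrow> prob (\<Union>N. P N)"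
    by (intro finite_Lim_measure_incseq) auto
  moreover have "(\<Union>N. P N) = {x\<in>space M. \<exists>n. 0 < birkhoff_sum g n x}"
  proof (intro set_eqI iffI)
    fix x assume "x \<in> (\<Union>N. P N)"
    then obtain N where "x \<in> space M" "0 < birkhoff_max g N x"
      by (auto simp: P_def)
    then show "x \<in> {x\<in>space M. \<exists>n. 0 < birkhoff_sum g n x}"
      using birkhoff_max_attained[of g N x] by auto
  next
    fix x assume "x \<in> {x\<in>space M. \<exists>n. 0 < birkhoff_sum g n x}"
    then obtain n where "x \<in> space M" "0 < birkhoff_sum g n x"
      by auto
    then have "x \<in> P n"
      using birkhoff_sum_le_max[of n n g x] unfolding P_def by auto
    then show "x \<in> (\<Union>N. P N)"
      by blast
  qed
  ultimately have "(\<lambda>N. - C * (1 - prob (P N))) \<longlonglongrightarrow> - C * (1 - 1)"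
    using pos by (intro tendsto_intros) auto
  moreover have "- C * (1 - prob (P N)) \<le> (\<integral>x. g x \<partial>M)" for N
    using integral_ge_indicator_integral[OF assms(1) _ bound, of "P N"]
      maximal_ergodic_inequality[OF assms(1) bound, of N]
    unfolding P_def by simp
  ultimately show ?thesis
    by (intro LIMSEQ_le_const2[of "\<lambda>N. - C * (1 - prob (P N))"]) auto
qed

lemma birkhoff_sum_indicator_Suc:
  "birkhoff_sum (indicator A) n (T x) \<le> birkhoff_sum (indicator A) (Suc n) x"
  "birkhoff_sum (indicator A) (Suc n) x \<le> birkhoff_sum (indicator A) n (T x) + 1"
  by (auto simp: birkhoff_sum_Suc indicator_def)

lemma measure_birkhoff_sum_pos_ne_1:
  assumes [measurable]: "A \<in> sets M" and "prob A < c"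
  shows "prob {x\<in>space M. \<exists>n. 0 < birkhoff_sum (\<lambda>x. indicator A x - c) n x} \<noteq> 1"
proof
  assume full: "prob {x\<in>space M. \<exists>n. 0 < birkhoff_sum (\<lambda>x. indicator A x - c) n x} = 1"
  have "0 \<le> c"
    using \<open>prob A < c\<close> measure_nonneg[of M A] by linarith
  then have "\<bar>indicator A x - c\<bar> \<le> 1 + c" for x :: 'a
    by (auto simp: indicator_def)
  with full have "0 \<le> (\<integral>x. indicator A x - c \<partial>M)"
    by (intro integral_nonneg_if_birkhoff_sum_pos_AE[of _ "1 + c"]) auto
  also have "(\<integral>x. indicator A x - c \<partial>M) = prob A - c"
    by (subst Bochner_Integration.integral_diff)
       (auto simp: prob_space emeasure_eq_measure intro!: integrable_real_indicator)
  finally show False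
    using \<open>prob A < c\<close> by simp
qed

text \<open>The set of points whose visit frequency to \<open>A\<close> exceeds \<open>c\<close> infinitely often (with a
  margin) is invariant; were it of full measure, the maximal ergodic theorem would give
  \<open>\<integral>(1\<^sub>A - c) \<ge> 0\<close>, contradicting \<open>\<mu> A < c\<close>.\<close>

lemma AE_not_exceeds_rate:
  assumes [measurable]: "A \<in> sets M" and "prob A < c"
  shows "AE x in M. \<not> exceeds_rate c (\<lambda>n. birkhoff_sum (indicator A) n x)"
proof -
  define L where "L = {x\<in>space M. exceeds_rate c (\<lambda>n. birkhoff_sum (indicator A) n x)}"
  have [measurable]: "L \<in> sets M"
    unfolding L_def exceeds_rate_def by measurable
  let ?P = "{x\<in>space M. \<exists>n. 0 < birkhoff_sum (\<lambda>x. indicator A x - c) n x}"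
  have "L \<subseteq> ?P"
  proof safe
    fix x assume "x \<in> L"
    then obtain m :: nat and n where "(c + 1 / Suc m) * n < birkhoff_sum (indicator A) n x"
      unfolding L_def exceeds_rate_def by blast
    moreover have "c * n \<le> (c + 1 / Suc m) * n"
      by (intro mult_right_mono) auto
    moreover have "birkhoff_sum (\<lambda>x. indicator A x - c) n x = birkhoff_sum (indicator A) n x - c * n"
      unfolding birkhoff_sum_def by (simp add: sum_subtractf)
    ultimately show "\<exists>n. 0 < birkhoff_sum (\<lambda>x. indicator A x - c) n x"
      by (intro exI[of _ n]) linarith
  qed (auto simp: L_def)
  then have "prob L \<le> prob ?P"
    by (intro finite_measure_mono) auto
  moreover have "prob ?P < 1"
    using measure_birkhoff_sum_pos_ne_1[OF assms] prob_le_1[of ?P] by (simp add: less_le)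
  ultimately have "prob L \<noteq> 1"
    by linarith
  moreover have "T -` L \<inter> space M = L"
  proof -
    have "exceeds_rate c (\<lambda>n. birkhoff_sum (indicator A) n x)
        \<longleftrightarrow> exceeds_rate c (\<lambda>n. birkhoff_sum (indicator A) n (T x))" for x
      by (rule exceeds_rate_shift_iff) (rule birkhoff_sum_indicator_Suc)+
    then show ?thesis
      using measurable_space[OF T_measurable] by (auto simp: L_def)
  qed
  ultimately have "prob L = 0"
    using T_ergodic[of L] by auto
  then show ?thesis
    using prob_eq_0[of L] \<open>L \<in> sets M\<close> unfolding L_def by simp
qed

lemma AE_eventually_birkhoff_sum_indicator_le:
  assumes "A \<in> sets M" "prob A < c"
  shows "AE x in M. \<exists>N. \<forall>n\<ge>N. birkhoff_sum (indicator A) n x \<le> c * n"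
proof -
  define c' where "c' = (prob A + c) / 2"
  have "prob A < c'" "0 < c - c'"
    using assms(2) by (auto simp: c'_def)
  from AE_not_exceeds_rate[OF assms(1) this(1)] show ?thesis
  proof eventually_elim
    case (elim x)
    then have "\<not> (\<forall>N. \<exists>n\<ge>N. (c' + (c - c')) * n < birkhoff_sum (indicator A) n x)"
      using \<open>0 < c - c'\<close> unfolding exceeds_rate_iff by blast
    then show ?case
      by (auto simp: not_less)
  qed
qed

lemma birkhoff_sum_indicator_compl:
  assumes "x \<in> space M"
  shows "birkhoff_sum (indicator (space M - A)) n x = n - birkhoff_sum (indicator A) n x"
proof -
  have "indicator (space M - A) ((T ^^ i) x) = 1 - (indicator A ((T ^^ i) x) :: real)" for i
    using funpow_T_space[OF assms] by (auto simp: indicator_def)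
  then show ?thesis
    by (simp add: birkhoff_sum_def sum_subtractf)
qed

theorem birkhoff_indicator:
  assumes [measurable]: "A \<in> sets M"
  shows "AE x in M. (\<lambda>n. birkhoff_sum (indicator A) n x / n) \<longlonglongrightarrow> prob A"
proof -
  let ?S = "\<lambda>n x. birkhoff_sum (indicator A) n x"
  have "AE x in M. \<forall>j. \<exists>N. \<forall>n\<ge>N. ?S n x \<le> (prob A + 1 / Suc j) * n"
    by (subst AE_all_countable) (auto intro: AE_eventually_birkhoff_sum_indicator_le)
  moreover have "AE x in M. \<forall>j. \<exists>N. \<forall>n\<ge>N.
      birkhoff_sum (indicator (space M - A)) n x \<le> (prob (space M - A) + 1 / Suc j) * n"
    by (subst AE_all_countable) (auto intro: AE_eventually_birkhoff_sum_indicator_le)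
  ultimately show ?thesis
    using AE_space
  proof eventually_elim
    case (elim x)
    show ?case
    proof (rule LIMSEQ_I)
      fix r :: real assume "0 < r"
      then obtain j :: nat where j: "1 / Suc j < r"
        by (metis nat_approx_posE)
      obtain N1 where N1: "\<forall>n\<ge>N1. ?S n x \<le> (prob A + 1 / Suc j) * n"
        using elim(1) by blast
      obtain N2 where N2: "\<forall>n\<ge>N2. n - ?S n x \<le> (1 - prob A + 1 / Suc j) * n"
        using elim(2,3) by (auto simp: birkhoff_sum_indicator_compl prob_compl)
      have "\<bar>?S n x / n - prob A\<bar> < r" if n: "max 1 (max N1 N2) \<le> n" for n
      proof -
        have "(prob A - 1 / Suc j) * n \<le> ?S n x" "?S n x \<le> (prob A + 1 / Suc j) * n"
          using N1 N2 n by (auto simp: algebra_simps)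
        moreover have "0 < real n"
          using n by auto
        ultimately have "prob A - 1 / Suc j \<le> ?S n x / n" "?S n x / n \<le> prob A + 1 / Suc j"
          by (simp_all add: pos_divide_le_eq pos_le_divide_eq)
        with j show ?thesis
          by (auto simp: abs_if)
      qed
      then show "\<exists>N. \<forall>n\<ge>N. norm (?S n x / n - prob A) < r"
        by (intro exI[of _ "max 1 (max N1 N2)"]) auto
    qed
  qed
qed

lemma birkhoff_indicator_L1:
  assumes [measurable]: "A \<in> sets M"
  shows "(\<lambda>n. (\<integral>x. \<bar>birkhoff_sum (indicator A) n x - n * prob A\<bar> \<partial>M) / n) \<longlonglongrightarrow> 0"
proof -
  define u where "u n x = \<bar>birkhoff_sum (indicator A) n x / n - prob A\<bar>" for n x
  have [measurable]: "u n \<in> borel_measurable M" for n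
    unfolding u_def by measurable
  have "AE x in M. (\<lambda>n. u n x) \<longlonglongrightarrow> 0"
    using birkhoff_indicator[OF assms]
    by eventually_elim (unfold u_def, intro tendsto_rabs_zero LIM_zero)
  moreover have "AE x in M. norm (u n x) \<le> 1 + prob A" for n
  proof (intro AE_I2)
    fix x
    have "0 \<le> birkhoff_sum (indicator A) n x / n" "birkhoff_sum (indicator A) n x / n \<le> 1"
      using birkhoff_sum_indicator_bounds[of A n x] by (auto simp: divide_le_eq)
    then show "norm (u n x) \<le> 1 + prob A"
      using measure_nonneg[of M A] unfolding u_def real_norm_def abs_le_iff by (intro conjI; linarith)
  qed
  ultimately have "(\<lambda>n. \<integral>x. u n x \<partial>M) \<longlonglongrightarrow> (\<integral>x. 0 \<partial>M)"
    by (intro integral_dominated_convergence[where w = "\<lambda>x. 1 + prob A"]) auto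
  then have "(\<lambda>n. \<integral>x. u n x \<partial>M) \<longlonglongrightarrow> 0"
    by simp
  moreover have "\<forall>\<^sub>F n in sequentially.
      (\<integral>x. u n x \<partial>M) = (\<integral>x. \<bar>birkhoff_sum (indicator A) n x - n * prob A\<bar> \<partial>M) / n"
  proof (rule eventually_sequentiallyI[of 1])
    fix n :: nat assume "1 \<le> n"
    then have "u n x = \<bar>birkhoff_sum (indicator A) n x - n * prob A\<bar> / n" for x
      by (simp add: u_def field_simps abs_div_pos[symmetric])
    then show "(\<integral>x. u n x \<partial>M) = (\<integral>x. \<bar>birkhoff_sum (indicator A) n x - n * prob A\<bar> \<partial>M) / n"
      by simp
  qed
  ultimately show ?thesis
    by (rule Lim_transform_eventually)
qed

lemma AE_birkhoff_indicator_comp_T: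
  assumes "A \<in> sets M"
  shows "AE x in M. (\<lambda>n. birkhoff_sum (indicator A) n (T x) / n) \<longlonglongrightarrow> prob A"
proof -
  have "AE x in distr M M T. (\<lambda>n. birkhoff_sum (indicator A) n x / n) \<longlonglongrightarrow> prob A"
    unfolding T_preserving by (rule birkhoff_indicator[OF assms])
  then show ?thesis
    by (rule AE_distrD[OF T_measurable])
qed

lemma sum_measure_vimage_inter_eq_integral:
  assumes [measurable]: "A \<in> sets M" "B \<in> sets M"
  shows "(\<Sum>j<n. prob ((T ^^ j) -` A \<inter> space M \<inter> B))
    = (\<integral>x. indicator B x * birkhoff_sum (indicator A) n x \<partial>M)"
proof -
  have "prob ((T ^^ j) -` A \<inter> space M \<inter> B) = (\<integral>x. indicator B x * indicator A ((T ^^ j) x) \<partial>M)" for j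
  proof -
    have "prob ((T ^^ j) -` A \<inter> space M \<inter> B) = (\<integral>x. indicator ((T ^^ j) -` A \<inter> space M \<inter> B) x \<partial>M)"
      by simp
    also have "\<dots> = (\<integral>x. indicator B x * indicator A ((T ^^ j) x) \<partial>M)"
      by (intro Bochner_Integration.integral_cong) (auto simp: indicator_def)
    finally show ?thesis .
  qed
  moreover have "integrable M (\<lambda>x. indicator B x * indicator A ((T ^^ j) x) :: real)" for j
    by (intro integrable_const_bound[of _ 1]) (auto simp: indicator_def)
  ultimately show ?thesis
    unfolding birkhoff_sum_def by (simp add: sum_distrib_left Bochner_Integration.integral_sum[symmetric])
qed

lemma abs_correlation_sum_le:
  assumes [measurable]: "A \<in> sets M" "B \<in> sets M"
  shows "\<bar>(\<Sum>j<n. prob ((T ^^ j) -` A \<inter> space M \<inter> B)) - n * prob A * prob B\<bar>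
    \<le> (\<integral>x. \<bar>birkhoff_sum (indicator A) n x - n * prob A\<bar> \<partial>M)"
proof -
  have bound: "\<bar>birkhoff_sum (indicator A) n x - n * prob A\<bar> \<le> n + n * prob A" for x
    using birkhoff_sum_indicator_bounds[of A n x] mult_nonneg_nonneg[of n "prob A"] measure_nonneg[of M A]
    unfolding abs_le_iff by (intro conjI; linarith)
  have int_S: "integrable M (\<lambda>x. indicator B x * birkhoff_sum (indicator A) n x)"
    using birkhoff_sum_indicator_bounds[of A n]
    by (intro integrable_const_bound[of _ n]) (auto simp: indicator_def)
  have int_c: "integrable M (\<lambda>x. indicator B x * (n * prob A))"
    by (intro integrable_const_bound[of _ "n * prob A"]) (auto simp: indicator_def)
  have "(\<Sum>j<n. prob ((T ^^ j) -` A \<inter> space M \<inter> B)) - n * prob A * prob B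
      = (\<integral>x. indicator B x * birkhoff_sum (indicator A) n x - indicator B x * (n * prob A) \<partial>M)"
    using int_S int_c by (simp add: sum_measure_vimage_inter_eq_integral mult.commute)
  also have "\<dots> = (\<integral>x. indicator B x * (birkhoff_sum (indicator A) n x - n * prob A) \<partial>M)"
    by (simp add: algebra_simps)
  also have "\<bar>\<dots>\<bar> \<le> (\<integral>x. \<bar>indicator B x * (birkhoff_sum (indicator A) n x - n * prob A)\<bar> \<partial>M)"
    by (rule integral_abs_bound)
  also have "\<dots> \<le> (\<integral>x. \<bar>birkhoff_sum (indicator A) n x - n * prob A\<bar> \<partial>M)"
    using bound
    by (intro integral_mono integrable_const_bound[of _ "n + n * prob A"])
       (auto simp: indicator_def abs_mult)
  finally show ?thesis .
qed

definition hit_sublevel :: "real \<Rightarrow> 'a set \<Rightarrow> real \<Rightarrow> 'a set" where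
  "hit_sublevel q A t = {x\<in>space M. scale q (hit T A x) \<le> ereal t}"

lemma hit_sublevel_measurable [measurable]: "A \<in> sets M \<Longrightarrow> hit_sublevel q A t \<in> sets M"
  unfolding hit_sublevel_def by (rule sets_Collect_hit_T)

lemma hit_sublevel_mono: "t \<le> t' \<Longrightarrow> hit_sublevel q A t \<subseteq> hit_sublevel q A t'"
  unfolding hit_sublevel_def by (auto intro: order_trans)

lemma measure_hit_le_of_le:
  assumes "A \<in> sets M" "j \<le> n"
  shows "prob {x\<in>space M. hit T A x \<le> enat j} \<le> n * prob A"
  using measure_hit_le[OF assms(1), of j] mult_right_mono[of j n "prob A"] assms(2) by simp

text \<open>Unless \<open>A\<close> is hit within \<open>j\<close> steps, the hitting time of \<open>x\<close> exceeds that of \<open>T\<^sup>j x\<close> by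
  exactly \<open>j\<close>.\<close>

lemma measure_inter_hit_sublevel_le_shifted:
  assumes "0 \<le> q" "j < n" and [measurable]: "A \<in> sets M" "Y \<in> sets M"
  shows "prob (Y \<inter> hit_sublevel q A t)
    \<le> prob ((T ^^ j) -` Y \<inter> space M \<inter> hit_sublevel q A (t + q * n)) + n * prob A"
proof -
  let ?H = "{x\<in>space M. hit T A x \<le> enat j}"
  have [measurable]: "?H \<in> sets M"
    by (rule sets_Collect_hit_T) simp
  have "(T ^^ j) -` (Y \<inter> hit_sublevel q A t) \<inter> space M
      \<subseteq> ((T ^^ j) -` Y \<inter> space M \<inter> hit_sublevel q A (t + q * n)) \<union> ?H"
  proof
    fix x assume x: "x \<in> (T ^^ j) -` (Y \<inter> hit_sublevel q A t) \<inter> space M"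
    show "x \<in> ((T ^^ j) -` Y \<inter> space M \<inter> hit_sublevel q A (t + q * n)) \<union> ?H"
    proof (cases "hit T A x \<le> enat j")
      case False
      then have "scale q (hit T A x) = scale q (hit T A ((T ^^ j) x)) + ereal (q * j)"
        using hit_funpow_shift scale_add_enat \<open>0 \<le> q\<close> by metis
      also have "\<dots> \<le> ereal t + ereal (q * n)"
        using x assms(1,2) by (intro add_mono) (auto simp: hit_sublevel_def mult_left_mono)
      finally show ?thesis
        using x by (simp add: hit_sublevel_def)
    qed (use x in auto)
  qed
  then have "prob ((T ^^ j) -` (Y \<inter> hit_sublevel q A t) \<inter> space M)
      \<le> prob ((T ^^ j) -` Y \<inter> space M \<inter> hit_sublevel q A (t + q * n)) + prob ?H"
    by (intro order_trans[OF finite_measure_mono measure_Un_le]) auto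
  moreover have "prob ((T ^^ j) -` (Y \<inter> hit_sublevel q A t) \<inter> space M) = prob (Y \<inter> hit_sublevel q A t)"
    by (rule measure_funpow_vimage) simp
  ultimately show ?thesis
    using measure_hit_le_of_le[of A j n] assms by linarith
qed

lemma measure_shifted_le_inter_hit_sublevel:
  assumes "0 \<le> q" "j < n" and [measurable]: "A \<in> sets M" "Y \<in> sets M"
  shows "prob ((T ^^ j) -` Y \<inter> space M \<inter> hit_sublevel q A t) \<le> prob (Y \<inter> hit_sublevel q A t) + n * prob A"
proof -
  let ?H = "{x\<in>space M. hit T A x \<le> enat j}"
  have [measurable]: "?H \<in> sets M"
    by (rule sets_Collect_hit_T) simp
  have "(T ^^ j) -` Y \<inter> space M \<inter> hit_sublevel q A t \<subseteq> ((T ^^ j) -` (Y \<inter> hit_sublevel q A t) \<inter> space M) \<union> ?H"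
  proof
    fix x assume x: "x \<in> (T ^^ j) -` Y \<inter> space M \<inter> hit_sublevel q A t"
    show "x \<in> ((T ^^ j) -` (Y \<inter> hit_sublevel q A t) \<inter> space M) \<union> ?H"
    proof (cases "hit T A x \<le> enat j")
      case False
      then have "scale q (hit T A ((T ^^ j) x)) \<le> scale q (hit T A x)"
        by (intro scale_mono[OF assms(1)] hit_funpow_shift_le)
      with x show ?thesis
        by (auto simp: hit_sublevel_def funpow_T_space)
    qed (use x in \<open>auto simp: hit_sublevel_def\<close>)
  qed
  then have "prob ((T ^^ j) -` Y \<inter> space M \<inter> hit_sublevel q A t)
      \<le> prob ((T ^^ j) -` (Y \<inter> hit_sublevel q A t) \<inter> space M) + prob ?H"
    by (intro order_trans[OF finite_measure_mono measure_Un_le]) auto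
  moreover have "prob ((T ^^ j) -` (Y \<inter> hit_sublevel q A t) \<inter> space M) = prob (Y \<inter> hit_sublevel q A t)"
    by (rule measure_funpow_vimage) simp
  ultimately show ?thesis
    using measure_hit_le_of_le[of A j n] assms by linarith
qed

lemma measure_inter_hit_sublevel_le:
  assumes "0 \<le> q" and [measurable]: "A \<in> sets M" "Y \<in> sets M"
  shows "n * prob (Y \<inter> hit_sublevel q A t)
    \<le> n * prob Y * prob (hit_sublevel q A (t + q * n))
      + (\<integral>x. \<bar>birkhoff_sum (indicator Y) n x - n * prob Y\<bar> \<partial>M) + n * (n * prob A)"
proof -
  have "(\<Sum>j<n. prob (Y \<inter> hit_sublevel q A t))
      \<le> (\<Sum>j<n. prob ((T ^^ j) -` Y \<inter> space M \<inter> hit_sublevel q A (t + q * n)) + n * prob A)"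
    using measure_inter_hit_sublevel_le_shifted[OF assms(1) _ assms(2,3)] by (intro sum_mono) auto
  moreover have "(\<Sum>j<n. prob ((T ^^ j) -` Y \<inter> space M \<inter> hit_sublevel q A (t + q * n)))
      \<le> n * prob Y * prob (hit_sublevel q A (t + q * n))
        + (\<integral>x. \<bar>birkhoff_sum (indicator Y) n x - n * prob Y\<bar> \<partial>M)"
    using abs_le_D1[OF abs_correlation_sum_le[of Y "hit_sublevel q A (t + q * n)" n]] by simp
  ultimately show ?thesis
    by (simp add: sum.distrib)
qed

lemma measure_hit_sublevel_le_inter:
  assumes "0 \<le> q" and [measurable]: "A \<in> sets M" "Y \<in> sets M"
  shows "n * prob Y * prob (hit_sublevel q A t)
    \<le> n * prob (Y \<inter> hit_sublevel q A t)
      + (\<integral>x. \<bar>birkhoff_sum (indicator Y) n x - n * prob Y\<bar> \<partial>M) + n * (n * prob A)"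
proof -
  have "(\<Sum>j<n. prob ((T ^^ j) -` Y \<inter> space M \<inter> hit_sublevel q A t))
      \<le> (\<Sum>j<n. prob (Y \<inter> hit_sublevel q A t) + n * prob A)"
    using measure_shifted_le_inter_hit_sublevel[OF assms(1) _ assms(2,3)] by (intro sum_mono) auto
  moreover have "n * prob Y * prob (hit_sublevel q A t)
      \<le> (\<Sum>j<n. prob ((T ^^ j) -` Y \<inter> space M \<inter> hit_sublevel q A t))
        + (\<integral>x. \<bar>birkhoff_sum (indicator Y) n x - n * prob Y\<bar> \<partial>M)"
    using abs_le_D2[OF abs_correlation_sum_le[of Y "hit_sublevel q A t" n]] by simp
  ultimately show ?thesis
    by (simp add: distrib_left)
qed

end

section \<open>Convergence in law\<close>

definition law_cdf :: "'a measure \<Rightarrow> (nat \<Rightarrow> 'a \<Rightarrow> ereal) \<Rightarrow> nat \<Rightarrow> real \<Rightarrow> real" where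
  "law_cdf P f k t = measure P {x\<in>space P. f k x \<le> ereal t}"

definition shift_dominated :: "(nat \<Rightarrow> real \<Rightarrow> real) \<Rightarrow> (nat \<Rightarrow> real \<Rightarrow> real) \<Rightarrow> bool" where
  "shift_dominated G H \<longleftrightarrow>
    (\<forall>\<delta>>0. \<forall>\<eta>>0. \<forall>K. \<forall>\<^sub>F k in sequentially. \<forall>t. \<bar>t\<bar> \<le> K \<longrightarrow> G k t \<le> H k (t + \<delta>) + \<eta>)"

lemma shift_dominatedI:
  assumes "\<And>\<delta> \<eta> K. 0 < \<delta> \<Longrightarrow> 0 < \<eta> \<Longrightarrow> \<forall>\<^sub>F k in sequentially. \<forall>t. \<bar>t\<bar> \<le> K \<longrightarrow> G k t \<le> H k (t + \<delta>) + \<eta>"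
  shows "shift_dominated G H"
  using assms unfolding shift_dominated_def by blast

lemma shift_dominated_both:
  assumes "\<And>\<delta> \<eta> K. 0 < \<delta> \<Longrightarrow> 0 < \<eta> \<Longrightarrow> \<forall>\<^sub>F k in sequentially. \<forall>t. \<bar>t\<bar> \<le> K \<longrightarrow>
    G k t \<le> H k (t + \<delta>) + \<eta> \<and> H k t \<le> G k (t + \<delta>) + \<eta>"
  shows "shift_dominated G H" "shift_dominated H G"
proof -
  show "shift_dominated G H"
  proof (rule shift_dominatedI)
    fix \<delta> \<eta> K :: real assume "0 < \<delta>" "0 < \<eta>"
    from assms[OF this, of K] show "\<forall>\<^sub>F k in sequentially. \<forall>t. \<bar>t\<bar> \<le> K \<longrightarrow> G k t \<le> H k (t + \<delta>) + \<eta>"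
      by eventually_elim auto
  qed
  show "shift_dominated H G"
  proof (rule shift_dominatedI)
    fix \<delta> \<eta> K :: real assume "0 < \<delta>" "0 < \<eta>"
    from assms[OF this, of K] show "\<forall>\<^sub>F k in sequentially. \<forall>t. \<bar>t\<bar> \<le> K \<longrightarrow> H k t \<le> G k (t + \<delta>) + \<eta>"
      by eventually_elim auto
  qed
qed

lemma continuity_point_between:
  fixes F :: "real \<Rightarrow> real"
  assumes "mono F" "a < b"
  obtains s where "a < s" "s < b" "isCont F s"
proof -
  have "\<not> {a<..<b} \<subseteq> {x. \<not> isCont F x}"
    using mono_ctble_discont[OF assms(1)] countable_subset uncountable_open_interval assms(2) by blast
  with that show ?thesis
    by auto
qed

lemma tendsto_if_shift_dominated:
  fixes F :: "real \<Rightarrow> real"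
  assumes "mono F" "shift_dominated G H" "shift_dominated H G"
    and lim: "\<And>s. isCont F s \<Longrightarrow> (\<lambda>k. H k s) \<longlonglongrightarrow> F s" and "isCont F t"
  shows "(\<lambda>k. G k t) \<longlonglongrightarrow> F t"
proof (rule LIMSEQ_I)
  fix r :: real assume "0 < r"
  then obtain e where e: "0 < e" "\<And>s. \<bar>s - t\<bar> < e \<Longrightarrow> \<bar>F s - F t\<bar> < r / 4"
    using \<open>isCont F t\<close> unfolding isCont_def LIM_eq
    by (metis diff_self abs_zero divide_pos_pos real_norm_def zero_less_numeral)
  obtain s1 where s1: "t < s1" "s1 < t + e" "isCont F s1"
    using continuity_point_between[OF assms(1), of t "t + e"] e(1) by auto
  obtain s2 where s2: "t - e < s2" "s2 < t" "isCont F s2"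
    using continuity_point_between[OF assms(1), of "t - e" t] e(1) by auto
  have "\<bar>F s1 - F t\<bar> < r / 4" "\<bar>F s2 - F t\<bar> < r / 4"
    using e(2)[of s1] e(2)[of s2] s1 s2 by auto
  then have F: "F s1 < F t + r / 4" "F t - r / 4 < F s2"
    unfolding abs_less_iff by linarith+
  have "\<forall>\<^sub>F k in sequentially. \<forall>u. \<bar>u\<bar> \<le> \<bar>t\<bar> \<longrightarrow> G k u \<le> H k (u + (s1 - t)) + r / 4"
    "\<forall>\<^sub>F k in sequentially. \<forall>u. \<bar>u\<bar> \<le> \<bar>s2\<bar> \<longrightarrow> H k u \<le> G k (u + (t - s2)) + r / 4"
    using assms(2,3) s1 s2 \<open>0 < r\<close> unfolding shift_dominated_def by auto
  moreover have "\<forall>\<^sub>F k in sequentially. dist (H k s1) (F s1) < r / 4"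
    "\<forall>\<^sub>F k in sequentially. dist (H k s2) (F s2) < r / 4"
    using tendstoD[OF lim[OF s1(3)], of "r / 4"] tendstoD[OF lim[OF s2(3)], of "r / 4"] \<open>0 < r\<close>
    by auto
  ultimately have "\<forall>\<^sub>F k in sequentially. norm (G k t - F t) < r"
  proof eventually_elim
    case (elim k)
    have "G k t \<le> H k s1 + r / 4" "H k s2 \<le> G k t + r / 4"
      using elim(1)[rule_format, of t] elim(2)[rule_format, of s2] by simp_all
    with elim(3,4) F show ?case
      unfolding dist_real_def real_norm_def abs_less_iff by linarith
  qed
  then show "\<exists>N. \<forall>k\<ge>N. norm (G k t - F t) < r"
    by (simp add: eventually_sequentially)
qed

lemma mono_dist_fun:
  assumes "prob_space N" and [measurable]: "R \<in> borel_measurable N"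
  shows "mono (dist_fun N R)"
proof (rule monoI)
  fix s t :: real assume "s \<le> t"
  interpret prob_space N by fact
  show "dist_fun N R s \<le> dist_fun N R t"
    unfolding dist_fun_def using \<open>s \<le> t\<close> by (intro finite_measure_mono) (auto intro: order_trans)
qed

lemma conv_in_law_iff_if_shift_dominated:
  assumes "prob_space N" "R \<in> borel_measurable N"
    and "shift_dominated (law_cdf P f) (law_cdf Q g)" "shift_dominated (law_cdf Q g) (law_cdf P f)"
  shows "conv_in_law P f N R \<longleftrightarrow> conv_in_law Q g N R"
  unfolding conv_in_law_def law_cdf_def[symmetric]
  using tendsto_if_shift_dominated[OF mono_dist_fun[OF assms(1,2)]] assms(3,4) by blast

section \<open>Hitting a target through an entrance set\<close>

locale entrance_setting = ergodic_system +
  fixes E E' :: "nat \<Rightarrow> 'a set" and Y :: "'a set"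
  assumes E_measurable [measurable]: "\<And>k. E k \<in> sets M" and E_pos: "\<And>k. 0 < prob (E k)"
    and E_tendsto_0: "(\<lambda>k. prob (E k)) \<longlonglongrightarrow> 0"
    and Y_measurable [measurable]: "Y \<in> sets M" and Y_pos: "0 < prob Y"
    and E'_measurable [measurable]: "\<And>k. E' k \<in> sets M" and E'_subset: "\<And>k. E' k \<subseteq> Y"
    and reach_via: "\<And>k. reach_only_via M T Y (E k) (E' k)"
begin

abbreviation MY :: "'a measure" where
  "MY \<equiv> uniform_measure M Y"

lemma prob_space_MY: "prob_space MY"
  using Y_pos by (intro prob_space_uniform_measure) (auto simp: emeasure_eq_measure)

lemma measure_MY: "A \<in> sets M \<Longrightarrow> measure MY A = prob (Y \<inter> A) / prob Y"
  using Y_pos by (intro measure_uniform_measure) (auto simp: emeasure_eq_measure)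

definition hit_diff :: "nat \<Rightarrow> 'a \<Rightarrow> ereal" where
  "hit_diff k x = scaled_diff (prob (E' k)) (hit T (E k) x) (hit T (E' k) x)"

lemma sets_Collect_hit_diff [measurable]: "{x\<in>space M. P (hit_diff k x)} \<in> sets M"
  unfolding hit_diff_def by (rule sets_Collect_hit2[OF T_measurable]) auto

lemma AE_reach_via:
  "AE x in M. \<forall>n. x \<in> Y \<longrightarrow> (T ^^ n) x \<in> E k \<longrightarrow> (\<exists>j\<le>n. (T ^^ j) x \<in> E' k)"
  using reach_via[of k] unfolding AE_all_countable reach_only_via_def by blast

text \<open>Almost every point of \<open>Y\<close> reaches \<open>E k\<close>, hence \<open>E' k\<close>; so \<open>E' k\<close> cannot be null.\<close>

lemma measure_E'_pos: "0 < prob (E' k)"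
proof (rule ccontr)
  assume "\<not> 0 < prob (E' k)"
  then have "emeasure M ((T ^^ j) -` E' k \<inter> space M) = 0" for j
    using measure_nonneg[of M "E' k"] by (simp add: emeasure_eq_measure measure_funpow_vimage)
  then have "(\<Union>j. (T ^^ j) -` E' k \<inter> space M) \<in> null_sets M"
    by (intro null_sets_UN null_setsI) auto
  then have "AE x in M. x \<notin> (\<Union>j. (T ^^ j) -` E' k \<inter> space M)"
    by (rule AE_not_in)
  then have "AE x in M. x \<notin> Y"
    using AE_visits_infinitely_often[OF E_measurable E_pos, of k] AE_reach_via[of k] AE_space
  proof eventually_elim
    case (elim x)
    show "x \<notin> Y"
    proof
      assume "x \<in> Y"
      obtain n where "(T ^^ n) x \<in> E k"
        using elim(2) by blast
      then obtain j where "(T ^^ j) x \<in> E' k"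
        using elim(3) \<open>x \<in> Y\<close> by blast
      with elim(1,4) show False
        by blast
    qed
  qed
  then have "prob Y = 0"
    by (simp add: prob_eq_0)
  with Y_pos show False
    by simp
qed

lemma AE_hits_finite: "AE x in M. (\<exists>a. hit T (E k) x = enat a) \<and> (\<exists>b. hit T (E' k) x = enat b)"
  using hit_finite_AE[OF E_measurable E_pos, of k] hit_finite_AE[OF E'_measurable measure_E'_pos, of k]
  by eventually_elim (auto simp: not_infinity_eq)

text \<open>A point of \<open>Y \<setminus> E' k\<close> reaches \<open>E k\<close> through \<open>E' k\<close>, and from \<open>E' k\<close> it reaches \<open>E k\<close> within
  \<open>m\<^sub>0\<close> steps, so its two hitting times differ by at most \<open>m\<^sub>0\<close>.\<close>

lemma AE_abs_hit_diff_le: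
  assumes delay: "E' k \<subseteq> (\<Union>m\<le>m0. (T ^^ m) -` E k \<inter> space M)"
  shows "AE x in M. x \<in> Y \<longrightarrow> x \<notin> E' k \<longrightarrow> \<bar>hit_diff k x\<bar> \<le> ereal (prob (E' k) * m0)"
  using AE_reach_via[of k] AE_hits_finite[of k]
proof eventually_elim
  case (elim x)
  show ?case
  proof (intro impI)
    assume "x \<in> Y" "x \<notin> E' k"
    obtain a b where ab: "hit T (E k) x = enat a" "hit T (E' k) x = enat b"
      using elim(2) by blast
    then have a: "(T ^^ a) x \<in> E k" "\<forall>i. 1 \<le> i \<and> i < a \<longrightarrow> (T ^^ i) x \<notin> E k"
      and b: "1 \<le> b" "(T ^^ b) x \<in> E' k" "\<forall>i. 1 \<le> i \<and> i < b \<longrightarrow> (T ^^ i) x \<notin> E' k"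
      by (auto simp: hit_eq_enat_iff)
    obtain j where j: "j \<le> a" "(T ^^ j) x \<in> E' k"
      using elim(1) \<open>x \<in> Y\<close> a(1) by blast
    have "j \<noteq> 0"
      using j(2) \<open>x \<notin> E' k\<close> by (cases j) auto
    have "b \<le> j"
    proof (rule ccontr)
      assume "\<not> b \<le> j"
      with \<open>j \<noteq> 0\<close> have "1 \<le> j \<and> j < b"
        by simp
      with b(3) j(2) show False
        by blast
    qed
    with j(1) have "b \<le> a"
      by simp
    have "(T ^^ b) x \<in> (\<Union>m\<le>m0. (T ^^ m) -` E k \<inter> space M)"
      using delay b(2) by blast
    then obtain m where "m \<le> m0" "(T ^^ (m + b)) x \<in> E k"
      by (auto simp: funpow_apply_add)
    have "a \<le> m + b"
    proof (rule ccontr)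
      assume "\<not> a \<le> m + b"
      with b(1) have "1 \<le> m + b \<and> m + b < a"
        by simp
      with a(2) \<open>(T ^^ (m + b)) x \<in> E k\<close> show False
        by blast
    qed
    then have "prob (E' k) * (real a - real b) \<le> prob (E' k) * m0"
      using \<open>m \<le> m0\<close> by (intro mult_left_mono) auto
    with \<open>b \<le> a\<close> show "\<bar>hit_diff k x\<bar> \<le> ereal (prob (E' k) * m0)"
      by (simp add: hit_diff_def ab scaled_diff_def)
  qed
qed

lemma measure_E'_tendsto_0_if_bounded_delay:
  assumes delay: "\<And>k. E' k \<subseteq> (\<Union>m\<le>m0. (T ^^ m) -` E k \<inter> space M)"
  shows "(\<lambda>k. prob (E' k)) \<longlonglongrightarrow> 0"
proof (rule tendsto_sandwich[of "\<lambda>k. 0" _ _ "\<lambda>k. Suc m0 * prob (E k)"])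
  have "prob (E' k) \<le> Suc m0 * prob (E k)" for k
  proof -
    have "prob (E' k) \<le> prob (\<Union>m\<le>m0. (T ^^ m) -` E k \<inter> space M)"
      using delay[of k] by (intro finite_measure_mono) auto
    also have "\<dots> \<le> Suc m0 * prob (E k)"
      using measure_UN_preimages_le[of "E k" "{..m0}"] by simp
    finally show ?thesis .
  qed
  then show "\<forall>\<^sub>F k in sequentially. prob (E' k) \<le> Suc m0 * prob (E k)"
    by simp
  show "(\<lambda>k. Suc m0 * prob (E k)) \<longlonglongrightarrow> 0"
    using tendsto_mult[OF tendsto_const E_tendsto_0] by simp
qed auto

lemma measure_MY_hit_diff_ge_le:
  assumes delay: "E' k \<subseteq> (\<Union>m\<le>m0. (T ^^ m) -` E k \<inter> space M)" and "prob (E' k) * m0 < \<epsilon>"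
  shows "measure MY {x\<in>space MY. \<not> \<bar>hit_diff k x\<bar> < ereal \<epsilon>} \<le> prob (E' k) / prob Y"
proof -
  have "AE x in M. x \<in> Y \<inter> {x\<in>space M. \<not> \<bar>hit_diff k x\<bar> < ereal \<epsilon>} \<longrightarrow> x \<in> E' k"
    using AE_abs_hit_diff_le[OF delay]
  proof eventually_elim
    case (elim x)
    show ?case
    proof
      assume x: "x \<in> Y \<inter> {x\<in>space M. \<not> \<bar>hit_diff k x\<bar> < ereal \<epsilon>}"
      show "x \<in> E' k"
      proof (rule ccontr)
        assume "x \<notin> E' k"
        with elim x have "\<bar>hit_diff k x\<bar> \<le> ereal (prob (E' k) * m0)"
          by blast
        also have "\<dots> < ereal \<epsilon>"
          using assms(2) by simp
        finally show False
          using x by simp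
      qed
    qed
  qed
  then have "prob (Y \<inter> {x\<in>space M. \<not> \<bar>hit_diff k x\<bar> < ereal \<epsilon>}) \<le> prob (E' k)"
    by (rule finite_measure_mono_AE) simp
  then have "prob (Y \<inter> {x\<in>space M. \<not> \<bar>hit_diff k x\<bar> < ereal \<epsilon>}) / prob Y \<le> prob (E' k) / prob Y"
    using Y_pos by (intro divide_right_mono) auto
  moreover have "measure MY {x\<in>space MY. \<not> \<bar>hit_diff k x\<bar> < ereal \<epsilon>}
      = prob (Y \<inter> {x\<in>space M. \<not> \<bar>hit_diff k x\<bar> < ereal \<epsilon>}) / prob Y"
    using measure_MY[OF sets_Collect_hit_diff[of "\<lambda>d. \<not> \<bar>d\<bar> < ereal \<epsilon>" k]] by simp
  ultimately show ?thesis
    by simp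
qed

lemma tendsto_zero_hit_diff_if_bounded_delay:
  assumes delay: "\<And>k. E' k \<subseteq> (\<Union>m\<le>m0. (T ^^ m) -` E k \<inter> space M)"
  shows "tendsto_zero_in_measure MY hit_diff"
  unfolding tendsto_zero_in_measure_def
proof (intro allI impI)
  fix \<epsilon> :: real assume "0 < \<epsilon>"
  have E'_0: "(\<lambda>k. prob (E' k)) \<longlonglongrightarrow> 0"
    by (rule measure_E'_tendsto_0_if_bounded_delay[OF delay])
  have "\<forall>\<^sub>F k in sequentially. prob (E' k) * m0 < \<epsilon>"
    using tendsto_mult[OF E'_0 tendsto_const[of "real m0"]] \<open>0 < \<epsilon>\<close> by (auto dest: order_tendstoD(2))
  then have upper: "\<forall>\<^sub>F k in sequentially.
      measure MY {x\<in>space MY. \<not> \<bar>hit_diff k x\<bar> < ereal \<epsilon>} \<le> prob (E' k) / prob Y"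
    by eventually_elim (rule measure_MY_hit_diff_ge_le[OF delay])
  have "(\<lambda>k. prob (E' k) / prob Y) \<longlonglongrightarrow> 0"
    using tendsto_divide[OF E'_0 tendsto_const[of "prob Y"]] Y_pos by simp
  with upper show "(\<lambda>k. measure MY {x\<in>space MY. \<not> \<bar>hit_diff k x\<bar> < ereal \<epsilon>}) \<longlonglongrightarrow> 0"
    by (intro tendsto_sandwich[OF always_eventually upper tendsto_const]) auto
qed

text \<open>Points of \<open>E' k\<close> whose first return to \<open>E' k\<close> misses \<open>E k\<close> carry a hitting time difference of at
  least \<open>\<mu>(E' k)\<close>; by the Kac-type inequality they have measure at least \<open>\<mu>(E' k \<setminus> E k)\<close>.\<close>

lemma measure_E'_le:
  "prob (E' k) \<le> prob (E k) + prob (Y \<inter> {x\<in>space M. \<not> \<bar>hit_diff k x\<bar> < ereal (prob (E' k))})"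
proof -
  have "(\<Union>m. returns_into (E' k) (E' k - E k) m) \<subseteq> Y \<inter> {x\<in>space M. \<not> \<bar>hit_diff k x\<bar> < ereal (prob (E' k))}"
  proof safe
    fix x m assume "x \<in> returns_into (E' k) (E' k - E k) m"
    then have x: "x \<in> space M" "x \<in> E' k" "hit T (E' k) x = enat m" "(T ^^ m) x \<notin> E k"
      by (auto simp: returns_into_def)
    then show "x \<in> Y" "x \<in> space M"
      using E'_subset by auto
    assume less: "\<bar>hit_diff k x\<bar> < ereal (prob (E' k))"
    show False
    proof (cases "hit T (E k) x")
      case (enat a)
      then have "a \<noteq> m"
        using x(4) by (auto simp: hit_eq_enat_iff)
      then have "prob (E' k) * 1 \<le> prob (E' k) * \<bar>real a - real m\<bar>"
        by (intro mult_left_mono) auto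
      with less enat x(3) show False
        by (simp add: hit_diff_def scaled_diff_def abs_mult)
    qed (use less in \<open>simp add: hit_diff_def scaled_diff_def\<close>)
  qed
  then have "prob (\<Union>m. returns_into (E' k) (E' k - E k) m)
      \<le> prob (Y \<inter> {x\<in>space M. \<not> \<bar>hit_diff k x\<bar> < ereal (prob (E' k))})"
    by (intro finite_measure_mono) auto
  then have "prob (E' k - E k) \<le> prob (Y \<inter> {x\<in>space M. \<not> \<bar>hit_diff k x\<bar> < ereal (prob (E' k))})"
    using measure_le_measure_returns_into[of "E' k" "E' k - E k"] measure_E'_pos[of k] by auto
  moreover have "prob (E' k) \<le> prob (E k) + prob (E' k - E k)"
    using finite_measure_mono[of "E' k" "E k \<union> (E' k - E k)"] measure_Un_le[of "E k" M "E' k - E k"]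
    by auto
  ultimately show ?thesis
    by linarith
qed

lemma measure_E'_tendsto_0:
  assumes "tendsto_zero_in_measure MY hit_diff"
  shows "(\<lambda>k. prob (E' k)) \<longlonglongrightarrow> 0"
proof (rule LIMSEQ_I)
  fix r :: real assume "0 < r"
  define e where "e = r / 2"
  have "0 < e" "e < r"
    using \<open>0 < r\<close> by (auto simp: e_def)
  let ?bad = "\<lambda>k. {x\<in>space M. \<not> \<bar>hit_diff k x\<bar> < ereal e}"
  have "(\<lambda>k. measure MY (?bad k)) \<longlonglongrightarrow> 0"
    using assms \<open>0 < e\<close> unfolding tendsto_zero_in_measure_def by simp
  then have "(\<lambda>k. prob (E k) + prob Y * measure MY (?bad k)) \<longlonglongrightarrow> 0 + prob Y * 0"
    by (intro tendsto_intros E_tendsto_0)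
  then have "\<forall>\<^sub>F k in sequentially. prob (E k) + prob Y * measure MY (?bad k) < e"
    using \<open>0 < e\<close> by (auto dest: order_tendstoD(2))
  then have "\<forall>\<^sub>F k in sequentially. prob (E' k) < e"
  proof eventually_elim
    case (elim k)
    show ?case
    proof (rule ccontr)
      assume "\<not> prob (E' k) < e"
      then have "{x\<in>space M. \<not> \<bar>hit_diff k x\<bar> < ereal (prob (E' k))} \<subseteq> ?bad k"
        by (auto simp: not_less intro: order.trans[of "ereal e" "ereal (prob (E' k))"])
      then have "prob (Y \<inter> {x\<in>space M. \<not> \<bar>hit_diff k x\<bar> < ereal (prob (E' k))}) \<le> prob (Y \<inter> ?bad k)"
        by (intro finite_measure_mono) auto
      also have "\<dots> = prob Y * measure MY (?bad k)"
        using measure_MY[OF sets_Collect_hit_diff[of "\<lambda>d. \<not> \<bar>d\<bar> < ereal e" k]] Y_pos by simp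
      finally show False
        using measure_E'_le[of k] elim \<open>\<not> prob (E' k) < e\<close> by linarith
    qed
  qed
  then obtain N where "\<forall>k\<ge>N. prob (E' k) < e"
    by (auto simp: eventually_sequentially)
  with \<open>e < r\<close> show "\<exists>N. \<forall>k\<ge>N. norm (prob (E' k) - 0) < r"
    by (intro exI[of _ N]) auto
qed

lemma measure_MY_le_union:
  assumes "A \<subseteq> B \<union> C" "B \<in> sets M" "C \<in> sets M"
  shows "measure MY A \<le> measure MY B + measure MY C"
proof -
  interpret MY: prob_space MY
    by (rule prob_space_MY)
  have "measure MY A \<le> measure MY (B \<union> C)"
    using assms by (intro MY.finite_measure_mono) auto
  also have "\<dots> \<le> measure MY B + measure MY C"
    using assms by (intro measure_Un_le) auto
  finally show ?thesis .
qed

lemma shift_dominated_hit_E_hit_E':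
  assumes "tendsto_zero_in_measure MY hit_diff"
  shows "shift_dominated (law_cdf MY (\<lambda>k x. scale (prob (E' k)) (hit T (E k) x)))
      (law_cdf MY (\<lambda>k x. scale (prob (E' k)) (hit T (E' k) x)))"
    and "shift_dominated (law_cdf MY (\<lambda>k x. scale (prob (E' k)) (hit T (E' k) x)))
      (law_cdf MY (\<lambda>k x. scale (prob (E' k)) (hit T (E k) x)))"
proof -
  let ?F = "law_cdf MY (\<lambda>k x. scale (prob (E' k)) (hit T (E k) x))"
  let ?F' = "law_cdf MY (\<lambda>k x. scale (prob (E' k)) (hit T (E' k) x))"
  have "\<forall>\<^sub>F k in sequentially. \<forall>t. \<bar>t\<bar> \<le> K \<longrightarrow> ?F k t \<le> ?F' k (t + \<delta>) + \<eta> \<and> ?F' k t \<le> ?F k (t + \<delta>) + \<eta>"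
    if "0 < \<delta>" "0 < \<eta>" for \<delta> \<eta> K
  proof -
    let ?bad = "\<lambda>k. {x\<in>space M. \<not> \<bar>hit_diff k x\<bar> < ereal \<delta>}"
    have "\<forall>\<^sub>F k in sequentially. measure MY (?bad k) < \<eta>"
      using assms that unfolding tendsto_zero_in_measure_def by (auto dest: order_tendstoD(2))
    then show ?thesis
    proof eventually_elim
      case (elim k)
      have "{x\<in>space MY. scale (prob (E' k)) (hit T (E k) x) \<le> ereal t}
          \<subseteq> {x\<in>space M. scale (prob (E' k)) (hit T (E' k) x) \<le> ereal (t + \<delta>)} \<union> ?bad k"
        "{x\<in>space MY. scale (prob (E' k)) (hit T (E' k) x) \<le> ereal t}
          \<subseteq> {x\<in>space M. scale (prob (E' k)) (hit T (E k) x) \<le> ereal (t + \<delta>)} \<union> ?bad k" for t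
        using scale_le_if_scaled_diff_less unfolding hit_diff_def by fastforce+
      then have "?F k t \<le> ?F' k (t + \<delta>) + measure MY (?bad k)" "?F' k t \<le> ?F k (t + \<delta>) + measure MY (?bad k)" for t
        unfolding law_cdf_def
        by (auto intro!: measure_MY_le_union sets_Collect_hit_T sets_Collect_hit_diff)
      with elim show ?case
        by (smt (verit))
    qed
  qed
  note close = this
  show "shift_dominated ?F ?F'" "shift_dominated ?F' ?F"
    using shift_dominated_both[OF close] by auto
qed

lemma hit_sublevel_MY_close:
  assumes [measurable]: "A \<in> sets M" and "0 \<le> q" "0 < n" "q * n \<le> \<delta>"
    and dev: "(\<integral>x. \<bar>birkhoff_sum (indicator Y) n x - n * prob Y\<bar> \<partial>M) < n * prob Y * \<eta> / 2"
    and small: "n * prob A < prob Y * \<eta> / 2"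
  shows "measure MY (hit_sublevel q A t) \<le> prob (hit_sublevel q A (t + \<delta>)) + \<eta>"
    and "prob (hit_sublevel q A t) \<le> measure MY (hit_sublevel q A (t + \<delta>)) + \<eta>"
proof -
  let ?c = "prob Y"
  have nc: "0 < real n * ?c"
    using assms(3) Y_pos by simp
  have small': "n * (n * prob A) < n * ?c * \<eta> / 2"
    using mult_strict_left_mono[OF small, of "real n"] assms(3) by (simp add: algebra_simps)
  have MY_eq: "prob (Y \<inter> hit_sublevel q A s) = ?c * measure MY (hit_sublevel q A s)" for s
    using measure_MY[of "hit_sublevel q A s"] Y_pos by simp
  have "prob (hit_sublevel q A (t + q * n)) \<le> prob (hit_sublevel q A (t + \<delta>))"
    using assms(4) by (intro finite_measure_mono hit_sublevel_mono) auto
  then have "n * ?c * prob (hit_sublevel q A (t + q * n)) \<le> n * ?c * prob (hit_sublevel q A (t + \<delta>))"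
    using nc by (intro mult_left_mono) auto
  with measure_inter_hit_sublevel_le[OF assms(2,1) Y_measurable, of n t] dev small'
  have "n * ?c * measure MY (hit_sublevel q A t) \<le> n * ?c * (prob (hit_sublevel q A (t + \<delta>)) + \<eta>)"
    unfolding MY_eq by (simp add: algebra_simps)
  with nc show "measure MY (hit_sublevel q A t) \<le> prob (hit_sublevel q A (t + \<delta>)) + \<eta>"
    by (simp add: mult_le_cancel_left_pos)
  have "0 \<le> \<delta>"
    using assms(2,4) by (metis mult_nonneg_nonneg of_nat_0_le_iff order_trans)
  then have "prob (Y \<inter> hit_sublevel q A t) \<le> prob (Y \<inter> hit_sublevel q A (t + \<delta>))"
    using hit_sublevel_mono[of t "t + \<delta>" q A] by (intro finite_measure_mono) auto
  then have "measure MY (hit_sublevel q A t) \<le> measure MY (hit_sublevel q A (t + \<delta>))"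
    using Y_pos by (simp add: measure_MY divide_right_mono)
  moreover from measure_hit_sublevel_le_inter[OF assms(2,1) Y_measurable, of n t] dev small'
  have "n * ?c * prob (hit_sublevel q A t) \<le> n * ?c * (measure MY (hit_sublevel q A t) + \<eta>)"
    unfolding MY_eq by (simp add: algebra_simps)
  ultimately show "prob (hit_sublevel q A t) \<le> measure MY (hit_sublevel q A (t + \<delta>)) + \<eta>"
    using nc by (simp add: mult_le_cancel_left_pos)
qed

lemma shift_dominated_uniform_measure:
  assumes E'_0: "(\<lambda>k. prob (E' k)) \<longlonglongrightarrow> 0"
  shows "shift_dominated (law_cdf MY (\<lambda>k x. scale (prob (E' k)) (hit T (E k) x)))
      (law_cdf M (\<lambda>k x. scale (prob (E' k)) (hit T (E k) x)))"
    and "shift_dominated (law_cdf M (\<lambda>k x. scale (prob (E' k)) (hit T (E k) x)))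
      (law_cdf MY (\<lambda>k x. scale (prob (E' k)) (hit T (E k) x)))"
proof -
  let ?F = "law_cdf MY (\<lambda>k x. scale (prob (E' k)) (hit T (E k) x))"
  let ?G = "law_cdf M (\<lambda>k x. scale (prob (E' k)) (hit T (E k) x))"
  let ?e = "\<lambda>n. \<integral>x. \<bar>birkhoff_sum (indicator Y) n x - n * prob Y\<bar> \<partial>M"
  have "\<forall>\<^sub>F k in sequentially. \<forall>t. \<bar>t\<bar> \<le> K \<longrightarrow> ?F k t \<le> ?G k (t + \<delta>) + \<eta> \<and> ?G k t \<le> ?F k (t + \<delta>) + \<eta>"
    if "0 < \<delta>" "0 < \<eta>" for \<delta> \<eta> K
  proof -
    have "0 < prob Y * \<eta> / 2"
      using Y_pos \<open>0 < \<eta>\<close> by simp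
    from order_tendstoD(2)[OF birkhoff_indicator_L1[OF Y_measurable] this]
    obtain N where N: "\<forall>n\<ge>N. ?e n / n < prob Y * \<eta> / 2"
      unfolding eventually_sequentially by blast
    define n where "n = Suc N"
    have n: "0 < n" "?e n < n * prob Y * \<eta> / 2"
      using N[rule_format, of n] by (auto simp: n_def divide_less_eq algebra_simps)
    have "\<forall>\<^sub>F k in sequentially. prob (E' k) * n < \<delta>"
      using tendsto_mult[OF E'_0 tendsto_const[of "real n"]] \<open>0 < \<delta>\<close> by (auto dest: order_tendstoD(2))
    moreover have "(\<lambda>k. n * prob (E k)) \<longlonglongrightarrow> 0"
      using tendsto_mult[OF tendsto_const[of "real n"] E_tendsto_0] by simp
    then have "\<forall>\<^sub>F k in sequentially. n * prob (E k) < prob Y * \<eta> / 2"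
      using \<open>0 < prob Y * \<eta> / 2\<close> by (rule order_tendstoD(2))
    ultimately show ?thesis
    proof eventually_elim
      case (elim k)
      show ?case
        using hit_sublevel_MY_close[OF E_measurable measure_nonneg n(1) less_imp_le[OF elim(1)] n(2) elim(2)]
        by (simp add: law_cdf_def hit_sublevel_def)
    qed
  qed
  note close = this
  show "shift_dominated ?F ?G" "shift_dominated ?G ?F"
    using shift_dominated_both[OF close] by auto
qed

text \<open>On \<open>Y\<close>, the induced hitting time of \<open>E' k\<close> counts the visits to \<open>Y\<close> before the hitting time
  of \<open>E' k\<close>; once that time is large, Birkhoff's theorem makes this count close to \<open>\<mu>(Y)\<close> times
  the hitting time.\<close>

lemma AE_ind_hit_close:
  assumes "0 < \<rho>" "\<rho> \<le> 1 / 2" "\<rho> * (2 * (\<bar>K\<bar> + 1)) \<le> \<delta>" "\<bar>t\<bar> \<le> K"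
  shows "AE x in M. x \<in> Y \<longrightarrow>
    (\<forall>n\<ge>n0. \<bar>birkhoff_sum (indicator Y) n (T x) / n - prob Y\<bar> \<le> prob Y * \<rho>) \<longrightarrow>
    \<not> hit T (E' k) x \<le> enat n0 \<longrightarrow>
    (scale (prob (E' k) / prob Y) (ind_hit T Y (E' k) x) \<le> ereal t
        \<longrightarrow> scale (prob (E' k)) (hit T (E' k) x) \<le> ereal (t + \<delta>)) \<and>
    (scale (prob (E' k)) (hit T (E' k) x) \<le> ereal t
        \<longrightarrow> scale (prob (E' k) / prob Y) (ind_hit T Y (E' k) x) \<le> ereal (t + \<delta>))"
  using AE_visits_infinitely_often[OF Y_measurable Y_pos] AE_hits_finite[of k]
proof eventually_elim
  case (elim x)
  show ?case
  proof (intro impI)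
    assume "x \<in> Y" and dev: "\<forall>n\<ge>n0. \<bar>birkhoff_sum (indicator Y) n (T x) / n - prob Y\<bar> \<le> prob Y * \<rho>"
      and late: "\<not> hit T (E' k) x \<le> enat n0"
    obtain m where m: "hit T (E' k) x = enat m"
      using elim(2) by blast
    then have "n0 < m" "0 < m"
      using late by simp_all
    have "ind_hit T Y (E' k) x = enat (visits T Y x m)"
      unfolding ind_hit_def using ind_hit_eq_visits[OF elim(1) E'_subset m] .
    with m rescaled_count_close[OF Y_pos measure_nonneg[of M "E' k"] \<open>0 < m\<close>
        dev[rule_format, OF less_imp_le[OF \<open>n0 < m\<close>]] assms]
    show "(scale (prob (E' k) / prob Y) (ind_hit T Y (E' k) x) \<le> ereal t
        \<longrightarrow> scale (prob (E' k)) (hit T (E' k) x) \<le> ereal (t + \<delta>)) \<and>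
      (scale (prob (E' k)) (hit T (E' k) x) \<le> ereal t
        \<longrightarrow> scale (prob (E' k) / prob Y) (ind_hit T Y (E' k) x) \<le> ereal (t + \<delta>))"
      by (simp add: visits_eq_birkhoff_sum)
  qed
qed

lemma measure_MY_le_if_AE_outside:
  assumes [measurable]: "A \<in> sets M" "B \<in> sets M" "Z \<in> sets M" "H \<in> sets M"
    and "AE x in M. x \<in> Y \<longrightarrow> x \<notin> Z \<longrightarrow> x \<notin> H \<longrightarrow> x \<in> A \<longrightarrow> x \<in> B"
  shows "measure MY A \<le> measure MY B + (prob Z + prob H) / prob Y"
proof -
  have "prob (Y \<inter> A) \<le> prob ((Y \<inter> B) \<union> Z \<union> H)"
    using assms(5) by (intro finite_measure_mono_AE) (auto elim: AE_mp)
  also have "\<dots> \<le> prob (Y \<inter> B) + prob Z + prob H"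
    using measure_Un_le[of "(Y \<inter> B) \<union> Z" M H] measure_Un_le[of "Y \<inter> B" M Z] by simp
  finally have "prob (Y \<inter> A) / prob Y \<le> (prob (Y \<inter> B) + prob Z + prob H) / prob Y"
    using Y_pos by (simp add: divide_right_mono)
  then show ?thesis
    by (simp add: measure_MY add_divide_distrib)
qed

lemma sets_Collect_ind_hit [measurable]: "{x\<in>space M. P (ind_hit T Y (E' k) x)} \<in> sets M"
  unfolding ind_hit_def by (rule sets_Collect_hit[OF return_map_measurable[OF T_measurable Y_measurable]]) simp

lemma ind_hit_law_close_pointwise:
  assumes \<rho>: "0 < \<rho>" "\<rho> \<le> 1 / 2" "\<rho> * (2 * (\<bar>K\<bar> + 1)) \<le> \<delta>" and "\<bar>t\<bar> \<le> K"
    and bound: "(prob {x\<in>space M. \<exists>n\<ge>n0. prob Y * \<rho> < \<bar>birkhoff_sum (indicator Y) n (T x) / n - prob Y\<bar>}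
      + prob {x\<in>space M. hit T (E' k) x \<le> enat n0}) / prob Y \<le> \<eta>"
  shows "law_cdf MY (\<lambda>k x. scale (prob (E' k) / prob Y) (ind_hit T Y (E' k) x)) k t
      \<le> law_cdf MY (\<lambda>k x. scale (prob (E' k)) (hit T (E' k) x)) k (t + \<delta>) + \<eta>"
    and "law_cdf MY (\<lambda>k x. scale (prob (E' k)) (hit T (E' k) x)) k t
      \<le> law_cdf MY (\<lambda>k x. scale (prob (E' k) / prob Y) (ind_hit T Y (E' k) x)) k (t + \<delta>) + \<eta>"
proof -
  let ?G = "\<lambda>t. {x\<in>space M. scale (prob (E' k) / prob Y) (ind_hit T Y (E' k) x) \<le> ereal t}"
  let ?F = "\<lambda>t. {x\<in>space M. scale (prob (E' k)) (hit T (E' k) x) \<le> ereal t}"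
  let ?Z = "{x\<in>space M. \<exists>n\<ge>n0. prob Y * \<rho> < \<bar>birkhoff_sum (indicator Y) n (T x) / n - prob Y\<bar>}"
  let ?H = "{x\<in>space M. hit T (E' k) x \<le> enat n0}"
  have Z_meas: "?Z \<in> sets M"
    by measurable
  have H_meas: "?H \<in> sets M" and F_meas: "?F s \<in> sets M" for s
    by (rule sets_Collect_hit_T, simp)+
  have G_meas: "?G s \<in> sets M" for s
    by (rule sets_Collect_ind_hit)
  have "AE x in M. x \<in> Y \<longrightarrow> x \<notin> ?Z \<longrightarrow> x \<notin> ?H \<longrightarrow>
      (x \<in> ?G t \<longrightarrow> x \<in> ?F (t + \<delta>)) \<and> (x \<in> ?F t \<longrightarrow> x \<in> ?G (t + \<delta>))"
    using AE_ind_hit_close[OF \<rho> \<open>\<bar>t\<bar> \<le> K\<close>, of n0 k] AE_space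
    by eventually_elim (simp add: not_less)
  then have ae1: "AE x in M. x \<in> Y \<longrightarrow> x \<notin> ?Z \<longrightarrow> x \<notin> ?H \<longrightarrow> x \<in> ?G t \<longrightarrow> x \<in> ?F (t + \<delta>)"
    and ae2: "AE x in M. x \<in> Y \<longrightarrow> x \<notin> ?Z \<longrightarrow> x \<notin> ?H \<longrightarrow> x \<in> ?F t \<longrightarrow> x \<in> ?G (t + \<delta>)"
    by (auto elim: AE_mp)
  show "law_cdf MY (\<lambda>k x. scale (prob (E' k) / prob Y) (ind_hit T Y (E' k) x)) k t
      \<le> law_cdf MY (\<lambda>k x. scale (prob (E' k)) (hit T (E' k) x)) k (t + \<delta>) + \<eta>"
    using measure_MY_le_if_AE_outside[OF G_meas F_meas Z_meas H_meas ae1] bound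
    by (simp add: law_cdf_def)
  show "law_cdf MY (\<lambda>k x. scale (prob (E' k)) (hit T (E' k) x)) k t
      \<le> law_cdf MY (\<lambda>k x. scale (prob (E' k) / prob Y) (ind_hit T Y (E' k) x)) k (t + \<delta>) + \<eta>"
    using measure_MY_le_if_AE_outside[OF F_meas G_meas Z_meas H_meas ae2] bound
    by (simp add: law_cdf_def)
qed

lemma shift_dominated_ind_hit:
  assumes E'_0: "(\<lambda>k. prob (E' k)) \<longlonglongrightarrow> 0"
  shows "shift_dominated (law_cdf MY (\<lambda>k x. scale (prob (E' k) / prob Y) (ind_hit T Y (E' k) x)))
      (law_cdf MY (\<lambda>k x. scale (prob (E' k)) (hit T (E' k) x)))"
    and "shift_dominated (law_cdf MY (\<lambda>k x. scale (prob (E' k)) (hit T (E' k) x)))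
      (law_cdf MY (\<lambda>k x. scale (prob (E' k) / prob Y) (ind_hit T Y (E' k) x)))"
proof -
  let ?G = "law_cdf MY (\<lambda>k x. scale (prob (E' k) / prob Y) (ind_hit T Y (E' k) x))"
  let ?F = "law_cdf MY (\<lambda>k x. scale (prob (E' k)) (hit T (E' k) x))"
  have "\<forall>\<^sub>F k in sequentially. \<forall>t. \<bar>t\<bar> \<le> K \<longrightarrow> ?G k t \<le> ?F k (t + \<delta>) + \<eta> \<and> ?F k t \<le> ?G k (t + \<delta>) + \<eta>"
    if "0 < \<delta>" "0 < \<eta>" for \<delta> \<eta> K
  proof -
    obtain \<rho> where \<rho>: "0 < \<rho>" "\<rho> \<le> 1 / 2" "\<rho> * (2 * (\<bar>K\<bar> + 1)) \<le> \<delta>"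
      using small_margin_exists[OF \<open>0 < \<delta>\<close>] by blast
    let ?Z = "\<lambda>n0. {x\<in>space M. \<exists>n\<ge>n0. prob Y * \<rho> < \<bar>birkhoff_sum (indicator Y) n (T x) / n - prob Y\<bar>}"
    have "(\<lambda>n0. prob (?Z n0)) \<longlonglongrightarrow> 0"
      using \<rho>(1) Y_pos by (intro measure_deviation_tendsto_0 AE_birkhoff_indicator_comp_T) auto
    moreover have "0 < \<eta> * prob Y / 2"
      using \<open>0 < \<eta>\<close> Y_pos by simp
    ultimately have "\<forall>\<^sub>F n0 in sequentially. prob (?Z n0) < \<eta> * prob Y / 2"
      by (rule order_tendstoD(2))
    then obtain n0 where n0: "prob (?Z n0) < \<eta> * prob Y / 2"
      unfolding eventually_sequentially by blast
    have "(\<lambda>k. n0 * prob (E' k)) \<longlonglongrightarrow> 0"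
      using tendsto_mult[OF tendsto_const[of "real n0"] E'_0] by simp
    then have "\<forall>\<^sub>F k in sequentially. n0 * prob (E' k) < \<eta> * prob Y / 2"
      using \<open>0 < \<eta> * prob Y / 2\<close> by (rule order_tendstoD(2))
    then show ?thesis
    proof eventually_elim
      case (elim k)
      have bound: "(prob (?Z n0) + prob {x\<in>space M. hit T (E' k) x \<le> enat n0}) / prob Y \<le> \<eta>"
        using measure_hit_le[OF E'_measurable, of k n0] n0 elim Y_pos by (simp add: field_simps)
      show ?case
        by (intro allI impI conjI; rule ind_hit_law_close_pointwise[OF \<rho> _ bound])
    qed
  qed
  note close = this
  show "shift_dominated ?G ?F" "shift_dominated ?F ?G"
    using shift_dominated_both[OF close] by auto
qed

theorem conv_in_law_ind_hit_iff_conv_in_law_hit: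
  assumes "prob_space N" "R \<in> borel_measurable N" and diff: "tendsto_zero_in_measure MY hit_diff"
  shows "(\<lambda>k. prob (E' k)) \<longlonglongrightarrow> 0"
    and "conv_in_law MY (\<lambda>k x. scale (prob (E' k) / prob Y) (ind_hit T Y (E' k) x)) N R
      \<longleftrightarrow> conv_in_law M (\<lambda>k x. scale (prob (E' k)) (hit T (E k) x)) N R"
proof -
  show E'_0: "(\<lambda>k. prob (E' k)) \<longlonglongrightarrow> 0"
    by (rule measure_E'_tendsto_0[OF diff])
  note law_iff = conv_in_law_iff_if_shift_dominated[OF assms(1,2)]
  show "conv_in_law MY (\<lambda>k x. scale (prob (E' k) / prob Y) (ind_hit T Y (E' k) x)) N R
      \<longleftrightarrow> conv_in_law M (\<lambda>k x. scale (prob (E' k)) (hit T (E k) x)) N R"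
    using law_iff[OF shift_dominated_ind_hit[OF E'_0]]
      law_iff[OF shift_dominated_hit_E_hit_E'(2,1)[OF diff]]
      law_iff[OF shift_dominated_uniform_measure[OF E'_0]]
    by simp
qed

end

theorem mainTheorem2:
  fixes M :: "'a measure" and T :: "'a \<Rightarrow> 'a"
    and E E' :: "nat \<Rightarrow> 'a set" and Y :: "'a set"
    and N :: "'b measure" and R :: "'b \<Rightarrow> ereal"
  assumes erg: "ergodic_pps M T"
    and E_meas: "\<And>k. E k \<in> sets M"
    and E_pos: "\<And>k. measure M (E k) > 0"
    and E_lim: "(\<lambda>k. measure M (E k)) \<longlonglongrightarrow> 0"
    and Y_meas: "Y \<in> sets M" and Y_pos: "measure M Y > 0"
    and E'_meas: "\<And>k. E' k \<in> sets M"
    and E'_sub: "\<And>k. E' k \<subseteq> Y"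
    and via: "\<And>k. reach_only_via M T Y (E k) (E' k)"
    and N_prob: "prob_space N"
    and R_meas: "R \<in> borel_measurable N"
    and R_nonneg: "\<And>\<omega>. \<omega> \<in> space N \<Longrightarrow> R \<omega> \<ge> 0"
  shows
    "(tendsto_zero_in_measure (uniform_measure M Y)
        (\<lambda>k x. scaled_diff (measure M (E' k)) (hit T (E k) x) (hit T (E' k) x))
      \<longrightarrow> ((\<lambda>k. measure M (E' k)) \<longlonglongrightarrow> 0) \<and>
          (conv_in_law (uniform_measure M Y)
             (\<lambda>k x. scale (measure M (E' k) / measure M Y) (ind_hit T Y (E' k) x)) N R
           \<longleftrightarrow> conv_in_law M (\<lambda>k x. scale (measure M (E' k)) (hit T (E k) x)) N R))
     \<and>
     ((\<exists>m0::nat. \<forall>k. E' k \<subseteq> (\<Union>m\<le>m0. (T ^^ m) -` (E k) \<inter> space M))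
      \<longrightarrow> tendsto_zero_in_measure (uniform_measure M Y)
            (\<lambda>k x. scaled_diff (measure M (E' k)) (hit T (E k) x) (hit T (E' k) x)))"
proof -
  interpret entrance_setting M T E E' Y
    using ergodic_system_if_ergodic_pps[OF erg]
    by (rule entrance_setting.intro, unfold_locales) (use assms in auto)
  have "(\<lambda>k x. scaled_diff (measure M (E' k)) (hit T (E k) x) (hit T (E' k) x)) = hit_diff"
    by (simp add: hit_diff_def fun_eq_iff)
  then show ?thesis
    using conv_in_law_ind_hit_iff_conv_in_law_hit[OF N_prob R_meas]
      tendsto_zero_hit_diff_if_bounded_delay
    by auto
qed

end
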